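(* Let $\beta\in[0,\infty)$ and $R\subseteq\Lambda$. Then $$\ker(\mathcal L^{(\beta)}_R)=\{S(\omega)\;:\;S\in\mathcal S_e,\ \omega\in\Omega,\ e\in R\}'=\{Q_R(\omega)\;:\;Q_R\in\mathcal B(\mathcal H_R),\ \omega\in\Omega\}'.$$
   Context: $\Lambda$ is a finite set of edges (of the $N\times N$ torus), each edge $e$ carrying a finite-dimensional Hilbert space $\mathcal H_e=\ell^2(G)$ for a finite Abelian group $G$; $\mathcal H_V=\bigotimes_{e\in V}\mathcal H_e$ and $\mathcal B(\mathcal H_V)$ is identified with $\mathcal B(\mathcal H_V)\otimes1_{\Lambda\setminus V}$. $H_\Lambda$ is the (self-adjoint) quantum double Hamiltonian on $\mathcal H_\Lambda$, $P_\lambda$ its spectral projections, $\Omega$ the set of differences $\lambda-\lambda'$ of its eigenvalues, and for $Q\in\mathcal B(\mathcal H_\Lambda)$, $Q(\omega)=\sum_{\lambda-\lambda'=\omega}P_\lambda QP_{\lambda'}$. For each edge $e$, $\mathcal S_e=\{S_{e,i}:i\in I\}\subset\mathcal B(\mathcal H_e)$ is a finite set closed under adjoints with commutant $\mathbb C1$ in $\mathcal B(\mathcal H_e)$. Rates $h^{(\beta)}_{e,i}(\omega)>0$ satisfy $h^{(\beta)}_{e,i}(-\omega)=h^{(\beta)}_{e,i}(\omega)e^{-\beta\omega}$. $\mathcal L^{(\beta)}_R=\sum_{e\in R}\mathcal D_e$ with $\mathcal D_e(O)=\sum_{i,\omega}h^{(\beta)}_{e,i}(\omega)\big(S_{e,i}(\omega)^\dagger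 OS_{e,i}(\omega)-\tfrac12\{S_{e,i}(\omega)^\dagger S_{e,i}(\omega),O\}\big)$. The prime denotes the commutant in $\mathcal B(\mathcal H_\Lambda)$. *)

theory Defs
  imports Complex_Main
begin

text \<open>Edges of the N x N torus: (i,j,True) is the horizontal edge from vertex (i,j)
 to ((i+1) mod N, j); (i,j,False) is the vertical edge from (i,j) to (i,(j+1) mod N).
 The Hilbert space H_V = tensor over e in V of l^2(G) is l^2 of the set of
 configurations conf V (functions edges -> G vanishing off V); operators on it are
 complex matrices indexed by configurations, vanishing outside conf V x conf V.\<close>

type_synonym edge = "nat \<times> nat \<times> bool"
type_synonym 'g op = "(edge \<Rightarrow> 'g) \<Rightarrow> (edge \<Rightarrow> 'g) \<Rightarrow> complex"

definition conf :: "edge set \<Rightarrow> (edge \<Rightarrow> 'g::zero) set" where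
  "conf V = {\<sigma>. \<forall>e. e \<notin> V \<longrightarrow> \<sigma> e = 0}"

definition ops :: "edge set \<Rightarrow> ('g::zero) op set" where
  "ops V = {A. \<forall>x y. (x \<notin> conf V \<or> y \<notin> conf V) \<longrightarrow> A x y = 0}"

definition opmul :: "edge set \<Rightarrow> ('g::zero) op \<Rightarrow> 'g op \<Rightarrow> 'g op" where
  "opmul V A B = (\<lambda>x y. \<Sum>z\<in>conf V. A x z * B z y)"

definition adj :: "('g::zero) op \<Rightarrow> 'g op" where
  "adj A = (\<lambda>x y. cnj (A y x))"

definition idop :: "edge set \<Rightarrow> ('g::zero) op" where
  "idop V = (\<lambda>x y. if x = y \<and> x \<in> conf V then 1 else 0)"

definition restr :: "(edge \<Rightarrow> 'g::zero) \<Rightarrow> edge set \<Rightarrow> edge \<Rightarrow> 'g" where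
  "restr \<sigma> V = (\<lambda>e. if e \<in> V then \<sigma> e else 0)"

text \<open>Identification of B(H_V) with B(H_V) tensor 1 on Lambda \ V.\<close>
definition embed :: "edge set \<Rightarrow> edge set \<Rightarrow> ('g::zero) op \<Rightarrow> 'g op" where
  "embed L V a = (\<lambda>x y. if x \<in> conf L \<and> y \<in> conf L \<and> (\<forall>e\<in>L - V. x e = y e)
                        then a (restr x V) (restr y V) else 0)"

definition local_ops :: "edge set \<Rightarrow> edge set \<Rightarrow> ('g::zero) op set" where
  "local_ops L V = embed L V ` ops V"

definition commutant :: "edge set \<Rightarrow> ('g::zero) op set \<Rightarrow> 'g op set" where
  "commutant L M = {X \<in> ops L. \<forall>T\<in>M. opmul L X T = opmul L T X}"

definition torus_edges :: "nat \<Rightarrow> edge set" where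
  "torus_edges N = {(i,j,b). i < N \<and> j < N}"

definition torus_verts :: "nat \<Rightarrow> (nat \<times> nat) set" where
  "torus_verts N = {(i,j). i < N \<and> j < N}"

definition src :: "edge \<Rightarrow> nat \<times> nat" where
  "src e = (case e of (i,j,b) \<Rightarrow> (i,j))"

definition tgt :: "nat \<Rightarrow> edge \<Rightarrow> nat \<times> nat" where
  "tgt N e = (case e of (i,j,b) \<Rightarrow> if b then ((i+1) mod N, j) else (i, (j+1) mod N))"

definition star :: "nat \<Rightarrow> nat \<times> nat \<Rightarrow> edge set" where
  "star N v = {e \<in> torus_edges N. src e = v \<or> tgt N e = v}"

definition vshift :: "nat \<Rightarrow> nat \<times> nat \<Rightarrow> 'g::ab_group_add \<Rightarrow> (edge \<Rightarrow> 'g) \<Rightarrow> edge \<Rightarrow> 'g" where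
  "vshift N v g \<sigma> = (\<lambda>e. if e \<in> torus_edges N
      then \<sigma> e + (if src e = v then g else 0) - (if tgt N e = v then g else 0) else \<sigma> e)"

definition vertex_op :: "nat \<Rightarrow> edge set \<Rightarrow> nat \<times> nat \<Rightarrow> ('g::{ab_group_add,finite}) op" where
  "vertex_op N L v = (\<lambda>x y. if x \<in> conf L \<and> y \<in> conf L
      then (\<Sum>g\<in>(UNIV::'g set). if x = vshift N v g y then 1 else 0) / of_nat (card (UNIV::'g set)) else 0)"

definition plaq_edges :: "nat \<Rightarrow> nat \<times> nat \<Rightarrow> edge set" where
  "plaq_edges N p = (case p of (i,j) \<Rightarrow>
     {(i,j,True), ((i+1) mod N, j, False), (i, (j+1) mod N, True), (i,j,False)})"

definition flux :: "nat \<Rightarrow> nat \<times> nat \<Rightarrow> (edge \<Rightarrow> 'g::ab_group_add) \<Rightarrow> 'g" where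
  "flux N p \<sigma> = (case p of (i,j) \<Rightarrow>
     \<sigma> (i,j,True) + \<sigma> ((i+1) mod N, j, False) - \<sigma> (i, (j+1) mod N, True) - \<sigma> (i,j,False))"

definition plaq_op :: "nat \<Rightarrow> edge set \<Rightarrow> nat \<times> nat \<Rightarrow> ('g::ab_group_add) op" where
  "plaq_op N L p = (\<lambda>x y. if x = y \<and> x \<in> conf L \<and> flux N p x = 0 then 1 else 0)"

definition qd_ham :: "nat \<Rightarrow> edge set \<Rightarrow> ('g::{ab_group_add,finite}) op" where
  "qd_ham N L = (\<lambda>x y.
      - (\<Sum>v\<in>{v \<in> torus_verts N. star N v \<subseteq> L}. vertex_op N L v x y)
      - (\<Sum>p\<in>{p \<in> torus_verts N. plaq_edges N p \<subseteq> L}. plaq_op N L p x y))"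

definition spectral_decomp :: "edge set \<Rightarrow> ('g::zero) op \<Rightarrow> real set \<Rightarrow> (real \<Rightarrow> 'g op) \<Rightarrow> bool" where
  "spectral_decomp L H ev P \<longleftrightarrow> finite ev \<and>
     (\<forall>l\<in>ev. P l \<in> ops L \<and> adj (P l) = P l \<and> opmul L (P l) (P l) = P l \<and> P l \<noteq> (\<lambda>x y. 0)) \<and>
     (\<forall>l\<in>ev. \<forall>m\<in>ev. l \<noteq> m \<longrightarrow> opmul L (P l) (P m) = (\<lambda>x y. 0)) \<and>
     (\<lambda>x y. \<Sum>l\<in>ev. P l x y) = idop L \<and>
     H = (\<lambda>x y. \<Sum>l\<in>ev. complex_of_real l * P l x y)"

definition bohr :: "real set \<Rightarrow> real set" where
  "bohr ev = {l - l' | l l'. l \<in> ev \<and> l' \<in> ev}"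

definition freq :: "edge set \<Rightarrow> real set \<Rightarrow> (real \<Rightarrow> ('g::zero) op) \<Rightarrow> 'g op \<Rightarrow> real \<Rightarrow> 'g op" where
  "freq L ev P Q \<omega> = (\<lambda>x y. \<Sum>l\<in>ev. \<Sum>l'\<in>ev.
      if l - l' = \<omega> then opmul L (opmul L (P l) Q) (P l') x y else 0)"

definition dissip :: "edge set \<Rightarrow> real set \<Rightarrow> (real \<Rightarrow> ('g::zero) op) \<Rightarrow> 'i set
     \<Rightarrow> (edge \<Rightarrow> 'i \<Rightarrow> 'g op) \<Rightarrow> (edge \<Rightarrow> 'i \<Rightarrow> real \<Rightarrow> real) \<Rightarrow> edge \<Rightarrow> 'g op \<Rightarrow> 'g op" where
  "dissip L ev P I S h e X = (\<lambda>x y. \<Sum>i\<in>I. \<Sum>\<omega>\<in>bohr ev.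
      (let T = freq L ev P (embed L {e} (S e i)) \<omega> in
        complex_of_real (h e i \<omega>) *
         (opmul L (opmul L (adj T) X) T x y
          - (opmul L (opmul L (adj T) T) X x y + opmul L X (opmul L (adj T) T) x y) / 2)))"

definition lindblad :: "edge set \<Rightarrow> real set \<Rightarrow> (real \<Rightarrow> ('g::zero) op) \<Rightarrow> 'i set
     \<Rightarrow> (edge \<Rightarrow> 'i \<Rightarrow> 'g op) \<Rightarrow> (edge \<Rightarrow> 'i \<Rightarrow> real \<Rightarrow> real) \<Rightarrow> edge set \<Rightarrow> 'g op \<Rightarrow> 'g op" where
  "lindblad L ev P I S h R X = (\<lambda>x y. \<Sum>e\<in>R. dissip L ev P I S h e X x y)"

definition op_kernel :: "edge set \<Rightarrow> (('g::zero) op \<Rightarrow> 'g op) \<Rightarrow> 'g op set" where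
  "op_kernel L F = {X \<in> ops L. F X = (\<lambda>x y. 0)}"

end

theory Submission
  imports Defs "Jordan_Normal_Form.Spectral_Radius"
begin

text \<open>The Davies generator is a Lindbladian
  \<open>L(X) = \<Sum>\<^sub>k c\<^sub>k (T\<^sub>k\<^sup>* X T\<^sub>k - (T\<^sub>k\<^sup>* T\<^sub>k X + X T\<^sub>k\<^sup>* T\<^sub>k)/2)\<close> with positive rates whose jump
  family \<open>T\<^sub>k = S\<^sub>e\<^sub>,\<^sub>i(\<omega>)\<close> is closed under adjoints, because \<open>S(\<omega>)\<^sup>* = S\<^sup>*(-\<omega>)\<close>. If X is Hermitian and
  \<open>L(X) = 0\<close>, the diagonal entries of \<open>L(X)\<close> in an eigenbasis \<open>(b, \<mu>\<^sub>b)\<close> of X give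
  \<open>\<Sum>\<^sub>k c\<^sub>k \<Sum>\<^sub>a (\<mu>\<^sub>a - \<mu>\<^sub>b) |\<langle>a, T\<^sub>k b\<rangle>|\<^sup>2 = 0\<close>; induction on the number of eigenvalues above
  \<open>\<mu>\<^sub>b\<close> shows that no \<open>T\<^sub>k\<close> connects different eigenvalues, so X commutes with every \<open>T\<^sub>k\<close>.
  A general X is split into Hermitian parts.

  For the second equality, the operators Q all of whose Bohr components \<open>Q(\<omega>)\<close> commute with X and
  \<open>X\<^sup>*\<close> form a \<open>*\<close>-algebra, since \<open>(Q Q')(\<omega>) = \<Sum>\<^sub>\<nu> Q(\<nu>) Q'(\<omega> - \<nu>)\<close> and \<open>Q(\<omega>)\<^sup>* = Q\<^sup>*(-\<omega>)\<close>.
  If X commutes with the jumps, this algebra contains the generators \<open>S\<^sub>e\<^sub>,\<^sub>i\<close>, whose commutant is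
  trivial, hence by the double commutant theorem every operator at a single edge of R, and by
  tensor decomposition every operator localised in R.\<close>

section \<open>Orthonormal bases of spaces of functions on a finite set\<close>

type_synonym 'a cvec = "'a \<Rightarrow> complex"
type_synonym 'a cmat = "'a \<Rightarrow> 'a \<Rightarrow> complex"

definition cinner :: "'a set \<Rightarrow> 'a cvec \<Rightarrow> 'a cvec \<Rightarrow> complex" where
  "cinner D u v = (\<Sum>x\<in>D. cnj (u x) * v x)"

definition vecs_on :: "'a set \<Rightarrow> 'a cvec set" where
  "vecs_on D = {v. \<forall>x. x \<notin> D \<longrightarrow> v x = 0}"

definition lin_comb :: "'a cvec set \<Rightarrow> ('a cvec \<Rightarrow> complex) \<Rightarrow> 'a cvec" where
  "lin_comb B c = (\<lambda>x. \<Sum>b\<in>B. c b * b x)"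

definition csubspace :: "'a set \<Rightarrow> 'a cvec set \<Rightarrow> bool" where
  "csubspace D M \<longleftrightarrow> M \<subseteq> vecs_on D \<and> (\<lambda>x. 0) \<in> M \<and> (\<forall>u\<in>M. \<forall>v\<in>M. (\<lambda>x. u x + v x) \<in> M)
     \<and> (\<forall>c. \<forall>u\<in>M. (\<lambda>x. c * u x) \<in> M)"

definition orthonormal :: "'a set \<Rightarrow> 'a cvec set \<Rightarrow> bool" where
  "orthonormal D B \<longleftrightarrow> finite B \<and> B \<subseteq> vecs_on D \<and>
     (\<forall>b\<in>B. \<forall>b'\<in>B. cinner D b b' = (if b = b' then 1 else 0))"

definition orthonormal_basis :: "'a set \<Rightarrow> 'a cvec set \<Rightarrow> 'a cvec set \<Rightarrow> bool" where
  "orthonormal_basis D M B \<longleftrightarrow> orthonormal D B \<and> B \<subseteq> M \<and> (\<forall>m\<in>M. m = lin_comb B (\<lambda>b. cinner D b m))"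

definition fourier_residual :: "'a set \<Rightarrow> 'a cvec set \<Rightarrow> 'a cvec \<Rightarrow> 'a cvec" where
  "fourier_residual D B v = (\<lambda>x. v x - lin_comb B (\<lambda>b. cinner D b v) x)"

definition normalized :: "'a set \<Rightarrow> 'a cvec \<Rightarrow> 'a cvec" where
  "normalized D v = (\<lambda>x. complex_of_real (1 / sqrt (Re (cinner D v v))) * v x)"

lemma csubspace_scale: "csubspace D M \<Longrightarrow> u \<in> M \<Longrightarrow> (\<lambda>x. c * u x) \<in> M"
  unfolding csubspace_def by blast

lemma csubspace_add: "csubspace D M \<Longrightarrow> u \<in> M \<Longrightarrow> v \<in> M \<Longrightarrow> (\<lambda>x. u x + v x) \<in> M"
  unfolding csubspace_def by blast

lemma csubspace_diff: "csubspace D M \<Longrightarrow> u \<in> M \<Longrightarrow> v \<in> M \<Longrightarrow> (\<lambda>x. u x - v x) \<in> M"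
  using csubspace_add[of D M u "\<lambda>x. (-1) * v x"] csubspace_scale[of D M v "-1"] by simp

lemma csubspace_vecs_on: "csubspace D M \<Longrightarrow> u \<in> M \<Longrightarrow> u \<in> vecs_on D"
  unfolding csubspace_def by blast

lemma csubspace_sum:
  assumes "csubspace D M" "finite K" "\<And>k. k \<in> K \<Longrightarrow> g k \<in> M"
  shows "(\<lambda>x. \<Sum>k\<in>K. c k * g k x) \<in> M"
  using assms(2,3)
proof (induction K rule: finite_induct)
  case empty
  then show ?case using assms(1) unfolding csubspace_def by simp
next
  case (insert a F)
  have "(\<lambda>x. c a * g a x) \<in> M"
    using csubspace_scale[OF assms(1)] insert by simp
  from csubspace_add[OF assms(1) this insert.IH] insert show ?case by simp
qed

lemma cinner_commute: "cinner D v u = cnj (cinner D u v)"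
  unfolding cinner_def by (simp add: mult.commute)

lemma cinner_sum_right: "cinner D u (\<lambda>x. \<Sum>k\<in>K. c k * g k x) = (\<Sum>k\<in>K. c k * cinner D u (g k))"
  unfolding cinner_def by (simp add: sum_distrib_left sum.swap[of _ D] mult.left_commute)

lemma cinner_lin_comb_right: "cinner D u (lin_comb B c) = (\<Sum>b\<in>B. c b * cinner D u b)"
  unfolding lin_comb_def by (rule cinner_sum_right)

lemma cinner_lin_comb_left: "cinner D (lin_comb B c) u = (\<Sum>b\<in>B. cnj (c b) * cinner D b u)"
  by (subst cinner_commute, simp add: cinner_lin_comb_right, subst cinner_commute, simp)

lemma cinner_scale_right: "cinner D u (\<lambda>x. c * v x) = c * cinner D u v"
  unfolding cinner_def by (simp add: sum_distrib_left mult.left_commute)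

lemma cinner_scale_left: "cinner D (\<lambda>x. c * v x) u = cnj c * cinner D v u"
  unfolding cinner_def by (simp add: sum_distrib_left mult.assoc)

lemma cinner_add_right: "cinner D u (\<lambda>x. v x + w x) = cinner D u v + cinner D u w"
  unfolding cinner_def by (simp add: distrib_left sum.distrib)

lemma cinner_diff_right: "cinner D u (\<lambda>x. v x - w x) = cinner D u v - cinner D u w"
  unfolding cinner_def by (simp add: right_diff_distrib sum_subtractf)

lemma cinner_diff_left: "cinner D (\<lambda>x. v x - w x) u = cinner D v u - cinner D w u"
  unfolding cinner_def by (simp add: left_diff_distrib sum_subtractf)

lemma cnj_mult_self: "cnj z * z = complex_of_real ((cmod z)\<^sup>2)"
  by (simp add: complex_norm_square mult.commute del: of_real_power)

lemma cinner_self: "cinner D u u = complex_of_real (\<Sum>x\<in>D. (cmod (u x))\<^sup>2)"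
  unfolding cinner_def of_real_sum cnj_mult_self ..

lemma cinner_self_eq_0:
  assumes "finite D" "u \<in> vecs_on D" "cinner D u u = 0"
  shows "u = (\<lambda>x. 0)"
proof
  fix x
  have "(\<Sum>x\<in>D. (cmod (u x))\<^sup>2) = 0"
    using assms(3) unfolding cinner_self of_real_eq_0_iff .
  then have "x \<in> D \<Longrightarrow> (cmod (u x))\<^sup>2 = 0"
    using sum_nonneg_eq_0_iff[OF assms(1), of "\<lambda>x. (cmod (u x))\<^sup>2"] by simp
  then show "u x = 0"
    using assms(2) unfolding vecs_on_def by (cases "x \<in> D") auto
qed

lemma lin_comb_vecs_on: "B \<subseteq> vecs_on D \<Longrightarrow> lin_comb B c \<in> vecs_on D"
  unfolding lin_comb_def vecs_on_def by (auto intro!: sum.neutral)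

lemma orthonormal_cinner_lin_comb:
  assumes "orthonormal D B" "b \<in> B"
  shows "cinner D b (lin_comb B c) = c b"
proof -
  have "cinner D b (lin_comb B c) = (\<Sum>b'\<in>B. if b = b' then c b' else 0)"
    unfolding cinner_lin_comb_right using assms unfolding orthonormal_def
    by (intro sum.cong) auto
  then show ?thesis
    using assms unfolding orthonormal_def by simp
qed

lemma fourier_residual_orthogonal:
  assumes "orthonormal D B" "b \<in> B"
  shows "cinner D b (fourier_residual D B v) = 0"
  unfolding fourier_residual_def cinner_diff_right orthonormal_cinner_lin_comb[OF assms] by simp

definition orthocomplement :: "'a set \<Rightarrow> 'a cvec set \<Rightarrow> 'a cvec set" where
  "orthocomplement D B = {w \<in> vecs_on D. \<forall>b\<in>B. cinner D b w = 0}"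

lemma csubspace_orthocomplement: "csubspace D (orthocomplement D B)"
  unfolding csubspace_def orthocomplement_def
  by (auto simp: vecs_on_def cinner_add_right cinner_scale_right) (simp add: cinner_def)

lemma fourier_residual_orthocomplement:
  assumes "orthonormal D B" "v \<in> vecs_on D"
  shows "fourier_residual D B v \<in> orthocomplement D B"
  using assms lin_comb_vecs_on[of B D] fourier_residual_orthogonal[OF assms(1)]
  unfolding orthocomplement_def orthonormal_def fourier_residual_def vecs_on_def by auto

lemma fourier_residual_eq_0_iff:
  "fourier_residual D B v = (\<lambda>x. 0) \<longleftrightarrow> v = lin_comb B (\<lambda>b. cinner D b v)"
  unfolding fourier_residual_def by (simp add: fun_eq_iff)

lemma bessel_inequality:
  assumes on: "orthonormal D B"
  shows "(\<Sum>b\<in>B. (cmod (cinner D b v))\<^sup>2) \<le> Re (cinner D v v)"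
proof -
  let ?p = "lin_comb B (\<lambda>b. cinner D b v)"
  let ?n = "complex_of_real (\<Sum>b\<in>B. (cmod (cinner D b v))\<^sup>2)"
  have pv: "cinner D ?p v = ?n"
    by (simp only: cinner_lin_comb_left of_real_sum cnj_mult_self)
  have vp: "cinner D v ?p = ?n"
    by (subst cinner_commute) (simp add: pv)
  have "cinner D ?p ?p = (\<Sum>b\<in>B. cnj (cinner D b v) * cinner D b v)"
    unfolding cinner_lin_comb_left by (simp add: orthonormal_cinner_lin_comb[OF on])
  then have pp: "cinner D ?p ?p = ?n"
    by (simp only: of_real_sum cnj_mult_self)
  have "0 \<le> Re (cinner D (fourier_residual D B v) (fourier_residual D B v))"
    unfolding cinner_self by (simp add: sum_nonneg)
  also have "\<dots> = Re (cinner D v v) - (\<Sum>b\<in>B. (cmod (cinner D b v))\<^sup>2)"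
    unfolding fourier_residual_def cinner_diff_left cinner_diff_right pv vp pp by simp
  finally show ?thesis by simp
qed

lemma orthonormal_card_le:
  assumes on: "orthonormal D B" and D: "finite D"
  shows "card B \<le> card D"
proof -
  define \<delta> :: "'a \<Rightarrow> 'a cvec" where "\<delta> a = (\<lambda>x. if x = a then 1 else 0)" for a
  have cinner_delta: "cinner D u (\<delta> a) = cnj (u a)" if "a \<in> D" for u a
    unfolding cinner_def \<delta>_def using D that by (simp add: if_distrib sum.delta cong: if_cong)
  have "real (card B) = (\<Sum>b\<in>B. Re (cinner D b b))"
    using on unfolding orthonormal_def by simp
  also have "\<dots> = (\<Sum>x\<in>D. \<Sum>b\<in>B. (cmod (cinner D b (\<delta> x)))\<^sup>2)"
    unfolding cinner_self Re_complex_of_real by (subst sum.swap) (simp add: cinner_delta)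
  also have "\<dots> \<le> (\<Sum>x\<in>D. Re (cinner D (\<delta> x) (\<delta> x)))"
    by (intro sum_mono bessel_inequality[OF on])
  also have "\<dots> = real (card D)"
    by (simp add: cinner_delta) (simp add: \<delta>_def)
  finally show ?thesis by simp
qed

lemma orthonormal_insert_normalized:
  assumes on: "orthonormal D B" and D: "finite D" and r: "r \<in> vecs_on D" "r \<noteq> (\<lambda>x. 0)"
    and orth: "\<forall>b\<in>B. cinner D b r = 0"
  shows "orthonormal D (insert (normalized D r) B)" "normalized D r \<notin> B"
proof -
  define n where "n = Re (cinner D r r)"
  define u where "u = normalized D r"
  have r_r: "cinner D r r = complex_of_real n"
    unfolding n_def cinner_self by simp
  have "n \<noteq> 0"
    using cinner_self_eq_0[OF D r(1)] r(2) r_r by auto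
  then have "n > 0"
    unfolding n_def cinner_self by (simp add: sum_nonneg order_le_neq_trans)
  have "cinner D u u = complex_of_real ((1 / sqrt n) * (1 / sqrt n) * n)"
    unfolding u_def normalized_def cinner_scale_left cinner_scale_right r_r
    by (simp only: Re_complex_of_real complex_cnj_complex_of_real of_real_mult mult.assoc)
  also have "\<dots> = 1"
    using \<open>n > 0\<close> by (simp add: field_simps)
  finally have u_u: "cinner D u u = 1" .
  have b_u: "cinner D b u = 0" if "b \<in> B" for b
    unfolding u_def normalized_def cinner_scale_right using orth that by simp
  then show u_B: "normalized D r \<notin> B"
    using u_u unfolding u_def[symmetric] by force
  have "u \<in> vecs_on D"
    using r(1) unfolding u_def normalized_def vecs_on_def by auto
  then show "orthonormal D (insert (normalized D r) B)"
    unfolding u_def[symmetric] orthonormal_def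
  proof (intro conjI ballI)
    show "finite (insert u B)" "insert u B \<subseteq> vecs_on D"
      using on \<open>u \<in> vecs_on D\<close> unfolding orthonormal_def by auto
    fix b b' assume "b \<in> insert u B" "b' \<in> insert u B"
    then consider "b = u" "b' = u" | "b = u" "b' \<in> B" | "b \<in> B" "b' = u" | "b \<in> B" "b' \<in> B"
      by blast
    then show "cinner D b b' = (if b = b' then 1 else 0)"
    proof cases
      case 2
      then show ?thesis using b_u[of b'] u_B cinner_commute[of D u b'] unfolding u_def by auto
    next
      case 4
      then show ?thesis using on unfolding orthonormal_def by blast
    qed (use u_u b_u u_B u_def in auto)
  qed
qed

text \<open>Gram--Schmidt by exhaustion: an orthonormal set that can always be enlarged while keeping
  the invariant Q would eventually violate the dimension bound \<open>orthonormal_card_le\<close>.\<close>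

lemma orthonormal_exhaust:
  assumes D: "finite D" and start: "Q {}"
    and grow: "\<And>B m. orthonormal D B \<Longrightarrow> Q B \<Longrightarrow> m \<in> M \<Longrightarrow> m \<noteq> lin_comb B (\<lambda>b. cinner D b m)
                 \<Longrightarrow> \<exists>u. u \<notin> B \<and> orthonormal D (insert u B) \<and> Q (insert u B)"
  shows "\<exists>B. orthonormal D B \<and> Q B \<and> (\<forall>m\<in>M. m = lin_comb B (\<lambda>b. cinner D b m))"
proof (rule ccontr)
  assume complete: "\<not> ?thesis"
  have "\<exists>B. orthonormal D B \<and> Q B \<and> card B = k" for k
  proof (induction k)
    case 0
    show ?case using start by (intro exI[of _ "{}"]) (simp add: orthonormal_def)
  next
    case (Suc k)
    then obtain B where B: "orthonormal D B" "Q B" "card B = k" by blast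
    with complete obtain m where "m \<in> M" "m \<noteq> lin_comb B (\<lambda>b. cinner D b m)" by blast
    with grow B obtain u where "u \<notin> B" "orthonormal D (insert u B)" "Q (insert u B)" by blast
    moreover have "finite B" using B(1) unfolding orthonormal_def by simp
    ultimately show ?case using B(3) by (intro exI[of _ "insert u B"]) simp
  qed
  then obtain B where "orthonormal D B" "card B = Suc (card D)" by blast
  then show False using orthonormal_card_le[OF _ D] by fastforce
qed

lemma orthonormal_basis_exists:
  assumes D: "finite D" and M: "csubspace D M"
  shows "\<exists>B. orthonormal_basis D M B"
proof -
  have "\<exists>B. orthonormal D B \<and> B \<subseteq> M \<and> (\<forall>m\<in>M. m = lin_comb B (\<lambda>b. cinner D b m))"
  proof (rule orthonormal_exhaust[OF D])
    fix B m assume on: "orthonormal D B" and BM: "B \<subseteq> M" and m: "m \<in> M"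
      and m_ne: "m \<noteq> lin_comb B (\<lambda>b. cinner D b m)"
    let ?r = "fourier_residual D B m"
    have "finite B" using on unfolding orthonormal_def by simp
    then have "lin_comb B (\<lambda>b. cinner D b m) \<in> M"
      unfolding lin_comb_def by (rule csubspace_sum[OF M]) (use BM in blast)
    then have "?r \<in> M"
      unfolding fourier_residual_def by (rule csubspace_diff[OF M m])
    moreover have "?r \<noteq> (\<lambda>x. 0)"
      using m_ne by (simp add: fourier_residual_eq_0_iff)
    moreover have "normalized D ?r \<in> M" if "?r \<in> M"
      unfolding normalized_def using csubspace_scale[OF M that] .
    ultimately show "\<exists>u. u \<notin> B \<and> orthonormal D (insert u B) \<and> insert u B \<subseteq> M"
      using orthonormal_insert_normalized[OF on D csubspace_vecs_on[OF M]] fourier_residual_orthogonal[OF on] BM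
      by blast
  qed simp
  then show ?thesis unfolding orthonormal_basis_def by blast
qed

section \<open>Spectral theorem for Hermitian matrices\<close>

definition mat_on :: "'a set \<Rightarrow> 'a cmat \<Rightarrow> bool" where
  "mat_on D A \<longleftrightarrow> (\<forall>x y. (x \<notin> D \<or> y \<notin> D) \<longrightarrow> A x y = 0)"

definition mat_apply :: "'a set \<Rightarrow> 'a cmat \<Rightarrow> 'a cvec \<Rightarrow> 'a cvec" where
  "mat_apply D A v = (\<lambda>x. \<Sum>y\<in>D. A x y * v y)"

definition hermitian :: "'a set \<Rightarrow> 'a cmat \<Rightarrow> bool" where
  "hermitian D A \<longleftrightarrow> (\<forall>x\<in>D. \<forall>y\<in>D. A x y = cnj (A y x))"

lemma mat_apply_vecs_on: "mat_on D A \<Longrightarrow> mat_apply D A v \<in> vecs_on D"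
  unfolding mat_on_def vecs_on_def mat_apply_def by simp

lemma mat_apply_sum: "mat_apply D A (\<lambda>x. \<Sum>k\<in>K. c k * g k x) = (\<lambda>x. \<Sum>k\<in>K. c k * mat_apply D A (g k) x)"
  unfolding mat_apply_def by (simp add: sum_distrib_left sum.swap[of _ D] mult.left_commute)

lemma mat_apply_lin_comb: "mat_apply D A (lin_comb B c) = (\<lambda>x. \<Sum>b\<in>B. c b * mat_apply D A b x)"
  unfolding lin_comb_def by (rule mat_apply_sum)

lemma mat_apply_scale: "mat_apply D A (\<lambda>x. c * u x) = (\<lambda>x. c * mat_apply D A u x)"
  unfolding mat_apply_def by (simp add: sum_distrib_left mult.left_commute)

lemma hermitian_cinner:
  assumes "hermitian D A"
  shows "cinner D u (mat_apply D A v) = cinner D (mat_apply D A u) v"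
proof -
  have "cinner D u (mat_apply D A v) = (\<Sum>x\<in>D. \<Sum>y\<in>D. cnj (u x) * A x y * v y)"
    unfolding cinner_def mat_apply_def by (simp add: sum_distrib_left mult.assoc)
  also have "\<dots> = (\<Sum>y\<in>D. \<Sum>x\<in>D. cnj (A y x * u x) * v y)"
  proof (subst sum.swap, intro sum.cong refl)
    fix x y assume "y \<in> D" "x \<in> D"
    then have "A x y = cnj (A y x)"
      using assms unfolding hermitian_def by blast
    then show "cnj (u x) * A x y * v y = cnj (A y x * u x) * v y"
      by simp
  qed
  also have "\<dots> = cinner D (mat_apply D A u) v"
    unfolding cinner_def mat_apply_def by (simp add: sum_distrib_right)
  finally show ?thesis .
qed

lemma complex_matrix_eigenvector:
  fixes M :: "nat \<Rightarrow> nat \<Rightarrow> complex"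
  assumes "m > 0"
  shows "\<exists>a c. (\<exists>i<m. c i \<noteq> 0) \<and> (\<forall>i<m. (\<Sum>j<m. M i j * c j) = a * c i)"
proof -
  define M' where "M' = mat m m (\<lambda>(i, j). M i j)"
  have M': "M' \<in> carrier_mat m m" unfolding M'_def by simp
  obtain a where "eigenvalue M' a"
    using spectrum_non_empty[OF M' assms] unfolding spectrum_def by blast
  then obtain v where v: "v \<in> carrier_vec m" "v \<noteq> 0\<^sub>v m" "M' *\<^sub>v v = a \<cdot>\<^sub>v v"
    using M' unfolding eigenvalue_def eigenvector_def by auto
  have "\<exists>i<m. v $ i \<noteq> 0"
    using v(1,2) by (metis carrier_vecD eq_vecI index_zero_vec)
  moreover have "(\<Sum>j<m. M i j * v $ j) = a * v $ i" if "i < m" for i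
  proof -
    have "(M' *\<^sub>v v) $ i = (\<Sum>j<m. M i j * v $ j)"
      using that v(1) unfolding M'_def by (simp add: scalar_prod_def lessThan_atLeast0)
    then show ?thesis
      using v(3) that v(1) by simp
  qed
  ultimately show ?thesis by blast
qed

lemma orthonormal_coordinate:
  fixes m :: nat
  assumes "orthonormal D B" "bij_betw f {..<m} B" "i < m"
  shows "cinner D (f i) (\<lambda>x. \<Sum>j<m. c j * f j x) = c i"
proof -
  have entry: "cinner D (f i) (f j) = (if j = i then 1 else 0)" if "j < m" for j
  proof -
    have "f i = f j \<longleftrightarrow> i = j"
      using assms that unfolding bij_betw_def inj_on_def by auto
    moreover have "f i \<in> B" "f j \<in> B"
      using assms that by (auto dest: bij_betw_apply)
    ultimately show ?thesis
      using assms(1) unfolding orthonormal_def by auto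
  qed
  have "cinner D (f i) (\<lambda>x. \<Sum>j<m. c j * f j x) = (\<Sum>j<m. if j = i then c j else 0)"
    unfolding cinner_sum_right
  proof (intro sum.cong refl)
    fix j assume "j \<in> {..<m}"
    then show "c j * cinner D (f i) (f j) = (if j = i then c j else 0)"
      using entry[of j] by simp
  qed
  then show ?thesis
    using assms(3) by simp
qed

text \<open>An eigenvector of the matrix of A in an orthonormal basis of W gives an eigenvector of A.\<close>

lemma invariant_subspace_eigenvector:
  assumes D: "finite D" and W: "csubspace D W" and inv: "\<forall>w\<in>W. mat_apply D A w \<in> W"
    and w: "w \<in> W" "w \<noteq> (\<lambda>x. 0)"
  shows "\<exists>u\<in>W. u \<noteq> (\<lambda>x. 0) \<and> (\<exists>a. mat_apply D A u = (\<lambda>x. a * u x))"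
proof -
  obtain B where on: "orthonormal D B" and BW: "B \<subseteq> W"
    and expand: "\<forall>m\<in>W. m = lin_comb B (\<lambda>b. cinner D b m)"
    using orthonormal_basis_exists[OF D W] unfolding orthonormal_basis_def by blast
  have "finite B" using on unfolding orthonormal_def by simp
  have "B \<noteq> {}"
    using expand w unfolding lin_comb_def by auto
  define m where "m = card B"
  have "m > 0"
    using \<open>finite B\<close> \<open>B \<noteq> {}\<close> unfolding m_def by (simp add: card_gt_0_iff)
  obtain f where f: "bij_betw f {..<m} B"
    using ex_bij_betw_nat_finite[OF \<open>finite B\<close>] unfolding m_def atLeast0LessThan by blast
  have fB: "f j \<in> B" if "j < m" for j
    using f that by (auto simp: bij_betw_def)
  define M where "M i j = cinner D (f i) (mat_apply D A (f j))" for i j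
  obtain a c where c_ne: "\<exists>i<m. c i \<noteq> 0" and eig: "\<forall>i<m. (\<Sum>j<m. M i j * c j) = a * c i"
    using complex_matrix_eigenvector[OF \<open>m > 0\<close>] by blast
  define u where "u = (\<lambda>x. \<Sum>j<m. c j * f j x)"
  have "u \<in> W"
    unfolding u_def by (rule csubspace_sum[OF W]) (use fB BW in auto)
  moreover have "u \<noteq> (\<lambda>x. 0)"
  proof
    assume "u = (\<lambda>x. 0)"
    then have "c i = 0" if "i < m" for i
      using orthonormal_coordinate[OF on f that, of c] unfolding u_def by (simp add: cinner_def)
    then show False
      using c_ne by blast
  qed
  moreover have "mat_apply D A u = (\<lambda>x. a * u x)"
  proof
    fix x
    have A_f: "mat_apply D A (f j) = (\<lambda>x. \<Sum>i<m. M i j * f i x)" if "j < m" for j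
    proof -
      have "mat_apply D A (f j) = lin_comb B (\<lambda>b. cinner D b (mat_apply D A (f j)))"
        using expand inv BW fB[OF that] by blast
      then show ?thesis
        unfolding lin_comb_def M_def sum.reindex_bij_betw[OF f, symmetric] .
    qed
    have "mat_apply D A u x = (\<Sum>j<m. c j * (\<Sum>i<m. M i j * f i x))"
      unfolding u_def mat_apply_sum by (simp add: A_f)
    also have "\<dots> = (\<Sum>i<m. (\<Sum>j<m. M i j * c j) * f i x)"
      by (simp add: sum_distrib_left sum_distrib_right mult_ac) (rule sum.swap)
    also have "\<dots> = a * u x"
      unfolding u_def by (simp add: eig sum_distrib_left mult.assoc)
    finally show "mat_apply D A u x = a * u x" .
  qed
  ultimately show ?thesis by blast
qed

lemma hermitian_eigenvalue_real:
  assumes D: "finite D" and A: "hermitian D A"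
    and u: "u \<in> vecs_on D" "u \<noteq> (\<lambda>x. 0)" and eig: "mat_apply D A u = (\<lambda>x. a * u x)"
  shows "a = complex_of_real (Re a)"
proof -
  have "a * cinner D u u = cinner D u (mat_apply D A u)"
    unfolding eig cinner_scale_right ..
  also have "\<dots> = cinner D (mat_apply D A u) u"
    by (rule hermitian_cinner[OF A])
  also have "\<dots> = cnj a * cinner D u u"
    unfolding eig cinner_scale_left ..
  finally have "a = cnj a"
    using cinner_self_eq_0[OF D u(1)] u(2) by auto
  then have "Im a = Im (cnj a)"
    by (rule arg_cong)
  then have "Im a = 0"
    by simp
  then show ?thesis
    by (simp add: complex_eq_iff)
qed

lemma hermitian_orthocomplement_invariant:
  assumes A: "mat_on D A" "hermitian D A"
    and eigen: "\<forall>b\<in>B. \<exists>\<mu>::real. mat_apply D A b = (\<lambda>x. complex_of_real \<mu> * b x)"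
    and w: "w \<in> orthocomplement D B"
  shows "mat_apply D A w \<in> orthocomplement D B"
proof -
  have "cinner D b (mat_apply D A w) = 0" if b: "b \<in> B" for b
  proof -
    obtain \<mu> where \<mu>: "mat_apply D A b = (\<lambda>x. complex_of_real \<mu> * b x)"
      using eigen b by blast
    have "cinner D b (mat_apply D A w) = cinner D (mat_apply D A b) w"
      by (rule hermitian_cinner[OF A(2)])
    also have "\<dots> = 0"
      using w b unfolding \<mu> cinner_scale_left orthocomplement_def by simp
    finally show ?thesis .
  qed
  then show ?thesis
    unfolding orthocomplement_def using mat_apply_vecs_on[OF A(1)] by simp
qed

theorem hermitian_eigenbasis:
  assumes D: "finite D" and A: "mat_on D A" "hermitian D A"
  shows "\<exists>B \<mu>. orthonormal_basis D (vecs_on D) B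
           \<and> (\<forall>b\<in>B. mat_apply D A b = (\<lambda>x. complex_of_real (\<mu> b) * b x))"
proof -
  let ?eigen = "\<lambda>B. \<forall>b\<in>B. \<exists>\<mu>::real. mat_apply D A b = (\<lambda>x. complex_of_real \<mu> * b x)"
  have "\<exists>B. orthonormal D B \<and> ?eigen B \<and> (\<forall>v\<in>vecs_on D. v = lin_comb B (\<lambda>b. cinner D b v))"
  proof (rule orthonormal_exhaust[OF D])
    fix B v assume on: "orthonormal D B" and eB: "?eigen B" and v: "v \<in> vecs_on D"
      and v_ne: "v \<noteq> lin_comb B (\<lambda>b. cinner D b v)"
    let ?W = "orthocomplement D B"
    have "fourier_residual D B v \<in> ?W" "fourier_residual D B v \<noteq> (\<lambda>x. 0)"
      using fourier_residual_orthocomplement[OF on v] v_ne by (simp_all add: fourier_residual_eq_0_iff)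
    then obtain u a where u: "u \<in> ?W" "u \<noteq> (\<lambda>x. 0)" and eig: "mat_apply D A u = (\<lambda>x. a * u x)"
      using invariant_subspace_eigenvector[OF D csubspace_orthocomplement]
        hermitian_orthocomplement_invariant[OF A eB] by blast
    have u_vecs: "u \<in> vecs_on D" and u_orth: "\<forall>b\<in>B. cinner D b u = 0"
      using u(1) unfolding orthocomplement_def by auto
    have "a = complex_of_real (Re a)"
      by (rule hermitian_eigenvalue_real[OF D A(2) u_vecs u(2) eig])
    then have "mat_apply D A (normalized D u) = (\<lambda>x. complex_of_real (Re a) * normalized D u x)"
      unfolding normalized_def mat_apply_scale eig by (metis mult.left_commute)
    then show "\<exists>u. u \<notin> B \<and> orthonormal D (insert u B) \<and> ?eigen (insert u B)"
      using orthonormal_insert_normalized[OF on D u_vecs u(2) u_orth] eB by blast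
  qed simp
  then obtain B where on: "orthonormal D B" and eB: "?eigen B"
    and expand: "\<forall>v\<in>vecs_on D. v = lin_comb B (\<lambda>b. cinner D b v)" by blast
  from eB obtain \<mu> where "\<forall>b\<in>B. mat_apply D A b = (\<lambda>x. complex_of_real (\<mu> b) * b x)"
    by metis
  moreover have "orthonormal_basis D (vecs_on D) B"
    using on expand unfolding orthonormal_basis_def orthonormal_def by blast
  ultimately show ?thesis by blast
qed

section \<open>Matrix algebra on a finite index set\<close>

definition mat_mult :: "'a set \<Rightarrow> 'a cmat \<Rightarrow> 'a cmat \<Rightarrow> 'a cmat" where
  "mat_mult D A B = (\<lambda>x y. \<Sum>z\<in>D. A x z * B z y)"

definition mat_adj :: "'a cmat \<Rightarrow> 'a cmat" where
  "mat_adj A = (\<lambda>x y. cnj (A y x))"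

definition mat_id :: "'a set \<Rightarrow> 'a cmat" where
  "mat_id D = (\<lambda>x y. if x = y \<and> x \<in> D then 1 else 0)"

definition mat_entry :: "'a set \<Rightarrow> 'a cmat \<Rightarrow> 'a cvec \<Rightarrow> 'a cvec \<Rightarrow> complex" where
  "mat_entry D A u v = cinner D u (mat_apply D A v)"

lemma mat_on_mat_mult: "mat_on D A \<Longrightarrow> mat_on D B \<Longrightarrow> mat_on D (mat_mult D A B)"
  unfolding mat_on_def mat_mult_def by auto

lemma mat_on_mat_adj: "mat_on D A \<Longrightarrow> mat_on D (mat_adj A)"
  unfolding mat_on_def mat_adj_def by auto

lemma mat_on_mat_id: "mat_on D (mat_id D)"
  unfolding mat_on_def mat_id_def by auto

lemma mat_adj_mat_adj [simp]: "mat_adj (mat_adj A) = A"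
  unfolding mat_adj_def by simp

lemma mat_adj_mat_mult: "mat_adj (mat_mult D A B) = mat_mult D (mat_adj B) (mat_adj A)"
  unfolding mat_adj_def mat_mult_def by (intro ext) (simp add: cnj_sum mult.commute)

lemma mat_adj_commute:
  "mat_mult D X A = mat_mult D A X \<Longrightarrow> mat_mult D (mat_adj X) (mat_adj A) = mat_mult D (mat_adj A) (mat_adj X)"
  by (metis mat_adj_mat_mult)

lemma mat_mult_assoc: "mat_mult D (mat_mult D A B) C = mat_mult D A (mat_mult D B C)"
  unfolding mat_mult_def
  by (intro ext, simp only: sum_distrib_left sum_distrib_right mult.assoc, rule sum.swap)

lemma mat_mult_zero_left [simp]: "mat_mult D (\<lambda>x y. 0) A = (\<lambda>x y. 0)"
  unfolding mat_mult_def by simp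

lemma mat_mult_zero_right [simp]: "mat_mult D A (\<lambda>x y. 0) = (\<lambda>x y. 0)"
  unfolding mat_mult_def by simp

lemma mat_mult_mat_id_right: "mat_on D A \<Longrightarrow> finite D \<Longrightarrow> mat_mult D A (mat_id D) = A"
  unfolding mat_mult_def mat_id_def mat_on_def
  by (intro ext) (auto simp: if_distrib sum.delta' cong: if_cong)

lemma mat_mult_mat_id_left:
  assumes "mat_on D A" "finite D"
  shows "mat_mult D (mat_id D) A = A"
proof (intro ext)
  fix x y
  have "mat_mult D (mat_id D) A x y = (\<Sum>z\<in>D. if z = x then A z y else 0)"
    unfolding mat_mult_def mat_id_def by (intro sum.cong) auto
  then show "mat_mult D (mat_id D) A x y = A x y"
    using assms unfolding mat_on_def by (cases "x \<in> D") auto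
qed

lemma mat_mult_sum_left:
  "mat_mult D (\<lambda>x y. \<Sum>k\<in>K. f k * A k x y) B = (\<lambda>x y. \<Sum>k\<in>K. f k * mat_mult D (A k) B x y)"
  unfolding mat_mult_def
  by (intro ext, simp only: sum_distrib_right sum_distrib_left mult.assoc, rule sum.swap)

lemma mat_mult_sum_right:
  "mat_mult D B (\<lambda>x y. \<Sum>k\<in>K. f k * A k x y) = (\<lambda>x y. \<Sum>k\<in>K. f k * mat_mult D B (A k) x y)"
  unfolding mat_mult_def
  by (intro ext, simp only: sum_distrib_left mult.left_commute, rule sum.swap)

lemma mat_mult_sum_left': "mat_mult D (\<lambda>x y. \<Sum>k\<in>K. A k x y) B = (\<lambda>x y. \<Sum>k\<in>K. mat_mult D (A k) B x y)"
  using mat_mult_sum_left[where f = "\<lambda>k. 1"] by simp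

lemma mat_mult_sum_right': "mat_mult D B (\<lambda>x y. \<Sum>k\<in>K. A k x y) = (\<lambda>x y. \<Sum>k\<in>K. mat_mult D B (A k) x y)"
  using mat_mult_sum_right[where f = "\<lambda>k. 1"] by simp

lemma mat_mult_lin_left:
  "mat_mult D (\<lambda>x y. a * X x y + b * Y x y) C = (\<lambda>x y. a * mat_mult D X C x y + b * mat_mult D Y C x y)"
  unfolding mat_mult_def by (intro ext) (simp add: distrib_right sum.distrib sum_distrib_left mult.assoc)

lemma mat_mult_lin_right:
  "mat_mult D C (\<lambda>x y. a * X x y + b * Y x y) = (\<lambda>x y. a * mat_mult D C X x y + b * mat_mult D C Y x y)"
  unfolding mat_mult_def by (intro ext) (simp add: distrib_left sum.distrib sum_distrib_left mult.left_commute)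

lemma mat_adj_sum: "mat_adj (\<lambda>x y. \<Sum>k\<in>K. f k * A k x y) = (\<lambda>x y. \<Sum>k\<in>K. cnj (f k) * mat_adj (A k) x y)"
  unfolding mat_adj_def by (simp add: cnj_sum)

lemma mat_apply_mat_mult: "mat_apply D (mat_mult D A B) v = mat_apply D A (mat_apply D B v)"
  unfolding mat_apply_def mat_mult_def
  by (rule ext, simp only: sum_distrib_left sum_distrib_right mult.assoc, rule sum.swap)

lemma mat_entry_expand: "mat_entry D A u v = (\<Sum>x\<in>D. \<Sum>y\<in>D. cnj (u x) * A x y * v y)"
  unfolding mat_entry_def cinner_def mat_apply_def by (simp add: sum_distrib_left mult.assoc)

lemma mat_entry_lin:
  "mat_entry D (\<lambda>x y. a * A x y + b * B x y) u v = a * mat_entry D A u v + b * mat_entry D B u v"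
  unfolding mat_entry_expand
  by (simp add: distrib_left distrib_right sum.distrib sum_distrib_left mult_ac)

lemma mat_entry_sum: "mat_entry D (\<lambda>x y. \<Sum>k\<in>K. F k x y) u v = (\<Sum>k\<in>K. mat_entry D (F k) u v)"
  unfolding mat_entry_expand
  by (simp only: sum_distrib_left sum_distrib_right, subst (2) sum.swap, subst sum.swap,
      simp only: mult.assoc mult.left_commute)

lemma mat_entry_mat_adj: "mat_entry D (mat_adj A) u v = cnj (mat_entry D A v u)"
  unfolding mat_entry_expand mat_adj_def
  by (simp only: cnj_sum complex_cnj_mult complex_cnj_cnj, subst sum.swap, simp only: mult_ac)

lemma mat_entry_mat_mult:
  assumes B: "orthonormal_basis D (vecs_on D) B" and M: "mat_on D M"
  shows "mat_entry D (mat_mult D L M) u v = (\<Sum>b\<in>B. mat_entry D L u b * mat_entry D M b v)"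
proof -
  have "mat_apply D M v = lin_comb B (\<lambda>b. cinner D b (mat_apply D M v))"
    using B mat_apply_vecs_on[OF M] unfolding orthonormal_basis_def by blast
  then have "mat_entry D (mat_mult D L M) u v = cinner D u (mat_apply D L (lin_comb B (\<lambda>b. mat_entry D M b v)))"
    unfolding mat_entry_def mat_apply_mat_mult by simp
  then show ?thesis
    unfolding mat_apply_lin_comb cinner_sum_right mat_entry_def by (simp add: mult.commute)
qed

lemma mat_entry_mat_mult_eigen_right:
  assumes "mat_apply D X v = (\<lambda>x. \<mu> * v x)"
  shows "mat_entry D (mat_mult D L X) u v = mat_entry D L u v * \<mu>"
  unfolding mat_entry_def mat_apply_mat_mult assms mat_apply_scale cinner_scale_right by simp

lemma mat_entry_mat_mult_eigen_left:
  assumes "hermitian D X" "mat_apply D X u = (\<lambda>x. complex_of_real \<mu> * u x)"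
  shows "mat_entry D (mat_mult D X L) u v = complex_of_real \<mu> * mat_entry D L u v"
  unfolding mat_entry_def mat_apply_mat_mult hermitian_cinner[OF assms(1)] assms(2) cinner_scale_left by simp

lemma mat_entry_eq_0_imp_eq_0:
  assumes D: "finite D" and B: "orthonormal_basis D (vecs_on D) B" and A: "mat_on D A"
    and entries: "\<forall>b\<in>B. \<forall>b'\<in>B. mat_entry D A b b' = 0"
  shows "A = (\<lambda>x y. 0)"
proof (intro ext)
  fix x y
  have expand: "v = lin_comb B (\<lambda>b. cinner D b v)" if "v \<in> vecs_on D" for v
    using B that unfolding orthonormal_basis_def by blast
  have A_b: "mat_apply D A b = (\<lambda>x. 0)" if "b \<in> B" for b
  proof -
    have "mat_apply D A b = lin_comb B (\<lambda>b'. mat_entry D A b' b)"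
      using expand[OF mat_apply_vecs_on[OF A]] unfolding mat_entry_def by blast
    also have "\<dots> = (\<lambda>x. 0)"
      unfolding lin_comb_def using entries that by (auto intro!: sum.neutral)
    finally show ?thesis .
  qed
  show "A x y = 0"
  proof (cases "y \<in> D")
    case True
    define \<delta> :: "'a cvec" where "\<delta> = (\<lambda>z. if z = y then 1 else 0)"
    have "\<delta> \<in> vecs_on D" using True unfolding vecs_on_def \<delta>_def by auto
    have "mat_apply D A \<delta> = mat_apply D A (lin_comb B (\<lambda>b. cinner D b \<delta>))"
      using expand[OF \<open>\<delta> \<in> vecs_on D\<close>] by simp
    also have "\<dots> = (\<lambda>x. 0)"
      unfolding mat_apply_lin_comb using A_b by simp
    finally show ?thesis
      using True D unfolding mat_apply_def \<delta>_def by (simp add: fun_eq_iff if_distrib cong: if_cong)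
  next
    case False
    then show ?thesis using A unfolding mat_on_def by blast
  qed
qed

section \<open>The kernel of a Lindbladian with adjoint-closed jump operators\<close>

definition lindbladian :: "'a set \<Rightarrow> 'k set \<Rightarrow> ('k \<Rightarrow> 'a cmat) \<Rightarrow> ('k \<Rightarrow> real) \<Rightarrow> 'a cmat \<Rightarrow> 'a cmat" where
  "lindbladian D K T c X = (\<lambda>x y. \<Sum>k\<in>K. complex_of_real (c k) *
      (mat_mult D (mat_mult D (mat_adj (T k)) X) (T k) x y
       - (mat_mult D (mat_mult D (mat_adj (T k)) (T k)) X x y + mat_mult D X (mat_mult D (mat_adj (T k)) (T k)) x y) / 2))"

lemma double_sum_nonpos_eq_0:
  fixes s :: "'k \<Rightarrow> 'b \<Rightarrow> real"
  assumes "finite K" "finite B" "\<forall>k\<in>K. \<forall>a\<in>B. s k a \<le> 0" "(\<Sum>k\<in>K. \<Sum>a\<in>B. s k a) = 0"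
  shows "\<forall>k\<in>K. \<forall>a\<in>B. s k a = 0"
proof -
  have "(\<Sum>(k, a)\<in>K \<times> B. - s k a) = 0"
    using assms(4) by (simp add: sum.cartesian_product[symmetric] sum_negf)
  then show ?thesis
    using sum_nonneg_eq_0_iff[of "K \<times> B" "\<lambda>(k, a). - s k a"] assms(1-3) by fastforce
qed

text \<open>Induction on the number of strictly higher levels: transitions from b to higher levels are
  adjoint to transitions into b from levels with fewer higher levels, which vanish by induction;
  what remains of the balance is a sum of non-positive terms.\<close>

lemma transitions_preserve_levels:
  fixes \<mu> :: "'b \<Rightarrow> real" and t :: "'k \<Rightarrow> 'b \<Rightarrow> 'b \<Rightarrow> complex" and c :: "'k \<Rightarrow> real"
  assumes B: "finite B" and K: "finite K" and c: "\<forall>k\<in>K. c k > 0"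
    and adj: "\<forall>k\<in>K. \<exists>k'\<in>K. \<forall>a\<in>B. \<forall>b\<in>B. t k' a b = cnj (t k b a)"
    and balance: "\<forall>b\<in>B. (\<Sum>k\<in>K. c k * (\<Sum>a\<in>B. (\<mu> a - \<mu> b) * (cmod (t k a b))\<^sup>2)) = 0"
  shows "\<forall>k\<in>K. \<forall>a\<in>B. \<forall>b\<in>B. \<mu> a \<noteq> \<mu> b \<longrightarrow> t k a b = 0"
proof -
  define higher where "higher b = card {a\<in>B. \<mu> b < \<mu> a}" for b
  have "\<forall>k\<in>K. \<forall>a\<in>B. \<mu> a \<noteq> \<mu> b \<longrightarrow> t k a b = 0" if "b \<in> B" for b
    using that
  proof (induction "higher b" arbitrary: b rule: less_induct)
    case (less b)
    have up: "t k a b = 0" if k: "k \<in> K" and a: "a \<in> B" and gt: "\<mu> a > \<mu> b" for k a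
    proof -
      have "higher a < higher b"
        unfolding higher_def by (rule psubset_card_mono) (use B gt a in auto)
      moreover obtain k' where "k' \<in> K" and k': "\<forall>x\<in>B. \<forall>y\<in>B. t k' x y = cnj (t k y x)"
        using adj k by blast
      ultimately have "t k' b a = 0"
        using less.hyps a less.prems gt by force
      then show ?thesis
        using k' a less.prems by simp
    qed
    define s where "s k a = c k * ((\<mu> a - \<mu> b) * (cmod (t k a b))\<^sup>2)" for k a
    have s_le: "s k a \<le> 0" if "k \<in> K" "a \<in> B" for k a
    proof (cases "\<mu> a > \<mu> b")
      case True
      then show ?thesis using up[OF that True] unfolding s_def by simp
    next
      case False
      then have "(\<mu> a - \<mu> b) * (cmod (t k a b))\<^sup>2 \<le> 0"
        by (simp add: mult_nonpos_nonneg)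
      moreover have "c k \<ge> 0"
        using c that by auto
      ultimately show ?thesis
        unfolding s_def by (simp add: mult_nonneg_nonpos)
    qed
    have "(\<Sum>k\<in>K. \<Sum>a\<in>B. s k a) = 0"
      using balance less.prems unfolding s_def by (simp add: sum_distrib_left)
    then have s_0: "s k a = 0" if "k \<in> K" "a \<in> B" for k a
      using double_sum_nonpos_eq_0[OF K B] s_le that by blast
    show ?case
    proof (intro ballI impI)
      fix k a assume k: "k \<in> K" and a: "a \<in> B" and ne: "\<mu> a \<noteq> \<mu> b"
      show "t k a b = 0"
      proof (cases "\<mu> a > \<mu> b")
        case True
        then show ?thesis using up k a by simp
      next
        case False
        then show ?thesis
          using s_0[OF k a] ne c k unfolding s_def by auto
      qed
    qed
  qed
  then show ?thesis by blast
qed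

lemma mat_entry_lindblad_term:
  "mat_entry D (\<lambda>x y. a * (P x y - (Q x y + R x y) / 2)) u v
    = a * (mat_entry D P u v - (mat_entry D Q u v + mat_entry D R u v) / 2)"
proof -
  have "(\<lambda>x y. a * (P x y - (Q x y + R x y) / 2))
      = (\<lambda>x y. a * P x y + (- a / 2) * (\<lambda>x y. 1 * Q x y + 1 * R x y) x y)"
    by (intro ext) (simp add: field_simps)
  then show ?thesis
    by (simp only: mat_entry_lin) (simp add: field_simps)
qed

lemma lindbladian_diagonal_entry:
  assumes B: "orthonormal_basis D (vecs_on D) B" and X: "hermitian D X"
    and eig: "\<forall>b\<in>B. mat_apply D X b = (\<lambda>x. complex_of_real (\<mu> b) * b x)"
    and T: "\<forall>k\<in>K. mat_on D (T k)" and b: "b \<in> B"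
  shows "mat_entry D (lindbladian D K T c X) b b
       = complex_of_real (\<Sum>k\<in>K. c k * (\<Sum>a\<in>B. (\<mu> a - \<mu> b) * (cmod (mat_entry D (T k) a b))\<^sup>2))"
proof -
  have "mat_entry D (\<lambda>x y. complex_of_real (c k) *
      (mat_mult D (mat_mult D (mat_adj (T k)) X) (T k) x y
       - (mat_mult D (mat_mult D (mat_adj (T k)) (T k)) X x y + mat_mult D X (mat_mult D (mat_adj (T k)) (T k)) x y) / 2)) b b
     = complex_of_real (c k * (\<Sum>a\<in>B. (\<mu> a - \<mu> b) * (cmod (mat_entry D (T k) a b))\<^sup>2))"
    if k: "k \<in> K" for k
  proof -
    define t where "t a = mat_entry D (T k) a b" for a
    have jump: "mat_entry D (mat_mult D (mat_adj (T k)) X) b a = cnj (t a) * complex_of_real (\<mu> a)"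
      if "a \<in> B" for a
      unfolding t_def using mat_entry_mat_mult_eigen_right[OF eig[rule_format, OF that]] mat_entry_mat_adj by metis
    have m1: "mat_entry D (mat_mult D (mat_mult D (mat_adj (T k)) X) (T k)) b b
        = complex_of_real (\<Sum>a\<in>B. \<mu> a * (cmod (t a))\<^sup>2)"
      unfolding mat_entry_mat_mult[OF B T[rule_format, OF k]] of_real_sum t_def[symmetric]
    proof (intro sum.cong refl)
      fix a assume "a \<in> B"
      show "mat_entry D (mat_mult D (mat_adj (T k)) X) b a * t a = complex_of_real (\<mu> a * (cmod (t a))\<^sup>2)"
        by (simp only: jump[OF \<open>a \<in> B\<close>] of_real_mult cnj_mult_self[symmetric] mult_ac)
    qed
    have n: "mat_entry D (mat_mult D (mat_adj (T k)) (T k)) b b = complex_of_real (\<Sum>a\<in>B. (cmod (t a))\<^sup>2)"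
      unfolding mat_entry_mat_mult[OF B T[rule_format, OF k]] mat_entry_mat_adj t_def[symmetric] of_real_sum
      by (simp add: cnj_mult_self)
    have m2: "mat_entry D (mat_mult D (mat_mult D (mat_adj (T k)) (T k)) X) b b
        = complex_of_real (\<mu> b * (\<Sum>a\<in>B. (cmod (t a))\<^sup>2))"
      unfolding mat_entry_mat_mult_eigen_right[OF eig[rule_format, OF b]] n by simp
    have m3: "mat_entry D (mat_mult D X (mat_mult D (mat_adj (T k)) (T k))) b b
        = complex_of_real (\<mu> b * (\<Sum>a\<in>B. (cmod (t a))\<^sup>2))"
      unfolding mat_entry_mat_mult_eigen_left[OF X eig[rule_format, OF b]] n by simp
    show ?thesis
      unfolding mat_entry_lindblad_term m1 m2 m3 t_def[symmetric]
      by (simp add: field_simps sum_subtractf sum_distrib_left)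
  qed
  then show ?thesis
    unfolding lindbladian_def mat_entry_sum of_real_sum by (intro sum.cong refl) simp
qed

lemma lindbladian_hermitian_kernel:
  assumes D: "finite D" and K: "finite K" and T: "\<forall>k\<in>K. mat_on D (T k)"
    and c: "\<forall>k\<in>K. c k > 0" and adj: "\<forall>k\<in>K. \<exists>k'\<in>K. T k' = mat_adj (T k)"
    and X: "mat_on D X" "hermitian D X" and L0: "lindbladian D K T c X = (\<lambda>x y. 0)"
  shows "\<forall>k\<in>K. mat_mult D X (T k) = mat_mult D (T k) X"
proof
  fix k assume k: "k \<in> K"
  obtain B \<mu> where B: "orthonormal_basis D (vecs_on D) B"
    and eig: "\<forall>b\<in>B. mat_apply D X b = (\<lambda>x. complex_of_real (\<mu> b) * b x)"
    using hermitian_eigenbasis[OF D X] by blast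
  have "finite B" using B unfolding orthonormal_basis_def orthonormal_def by simp
  define t where "t k a b = mat_entry D (T k) a b" for k a b
  have "\<forall>b\<in>B. (\<Sum>k\<in>K. c k * (\<Sum>a\<in>B. (\<mu> a - \<mu> b) * (cmod (t k a b))\<^sup>2)) = 0"
  proof
    fix b assume "b \<in> B"
    have "complex_of_real (\<Sum>k\<in>K. c k * (\<Sum>a\<in>B. (\<mu> a - \<mu> b) * (cmod (t k a b))\<^sup>2))
        = mat_entry D (lindbladian D K T c X) b b"
      unfolding t_def by (rule lindbladian_diagonal_entry[OF B X(2) eig T \<open>b \<in> B\<close>, symmetric])
    also have "\<dots> = 0"
      unfolding L0 by (simp add: mat_entry_expand)
    finally show "(\<Sum>k\<in>K. c k * (\<Sum>a\<in>B. (\<mu> a - \<mu> b) * (cmod (t k a b))\<^sup>2)) = 0"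
      by (simp only: of_real_eq_0_iff)
  qed
  moreover have "\<forall>k\<in>K. \<exists>k'\<in>K. \<forall>a\<in>B. \<forall>b\<in>B. t k' a b = cnj (t k b a)"
    using adj unfolding t_def by (metis mat_entry_mat_adj)
  ultimately have t_0: "\<forall>k\<in>K. \<forall>a\<in>B. \<forall>b\<in>B. \<mu> a \<noteq> \<mu> b \<longrightarrow> t k a b = 0"
    using transitions_preserve_levels[OF \<open>finite B\<close> K c] by blast
  define Z where "Z = (\<lambda>x y. 1 * mat_mult D X (T k) x y + (-1) * mat_mult D (T k) X x y)"
  have "mat_entry D Z a b = 0" if a: "a \<in> B" and b: "b \<in> B" for a b
  proof -
    have "mat_entry D Z a b = (complex_of_real (\<mu> a) - complex_of_real (\<mu> b)) * t k a b"
      unfolding Z_def mat_entry_lin t_def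
        mat_entry_mat_mult_eigen_left[OF X(2) eig[rule_format, OF a]]
        mat_entry_mat_mult_eigen_right[OF eig[rule_format, OF b]]
      by (simp add: algebra_simps)
    then show ?thesis
      using t_0 k a b by (cases "\<mu> a = \<mu> b") auto
  qed
  moreover have "mat_on D Z"
    using T k X(1) unfolding Z_def mat_on_def mat_mult_def by auto
  ultimately have "Z = (\<lambda>x y. 0)"
    using mat_entry_eq_0_imp_eq_0[OF D B] by blast
  then show "mat_mult D X (T k) = mat_mult D (T k) X"
    unfolding Z_def by (simp add: fun_eq_iff)
qed

lemma lindbladian_lin:
  "lindbladian D K T c (\<lambda>x y. a * X x y + b * Y x y)
    = (\<lambda>x y. a * lindbladian D K T c X x y + b * lindbladian D K T c Y x y)"
  unfolding lindbladian_def mat_mult_lin_left mat_mult_lin_right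
  by (intro ext, simp only: sum_distrib_left sum.distrib[symmetric], rule sum.cong, simp, simp add: field_simps)

lemma lindbladian_mat_adj: "lindbladian D K T c (mat_adj X) = mat_adj (lindbladian D K T c X)"
proof (intro ext)
  fix x y
  have "mat_adj (lindbladian D K T c X) x y = (\<Sum>k\<in>K. complex_of_real (c k) *
      (mat_adj (mat_mult D (mat_mult D (mat_adj (T k)) X) (T k)) x y
       - (mat_adj (mat_mult D (mat_mult D (mat_adj (T k)) (T k)) X) x y
          + mat_adj (mat_mult D X (mat_mult D (mat_adj (T k)) (T k))) x y) / 2))"
    unfolding lindbladian_def by (simp add: mat_adj_def cnj_sum)
  also have "\<dots> = lindbladian D K T c (mat_adj X) x y"
    unfolding lindbladian_def mat_adj_mat_mult mat_adj_mat_adj mat_mult_assoc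
    by (rule sum.cong, simp, simp add: algebra_simps)
  finally show "lindbladian D K T c (mat_adj X) x y = mat_adj (lindbladian D K T c X) x y" by simp
qed

theorem lindbladian_eq_0_iff_commute:
  assumes D: "finite D" and K: "finite K" and T: "\<forall>k\<in>K. mat_on D (T k)"
    and c: "\<forall>k\<in>K. c k > 0" and adj: "\<forall>k\<in>K. \<exists>k'\<in>K. T k' = mat_adj (T k)"
    and X: "mat_on D X"
  shows "lindbladian D K T c X = (\<lambda>x y. 0) \<longleftrightarrow> (\<forall>k\<in>K. mat_mult D X (T k) = mat_mult D (T k) X)"
proof
  assume comm: "\<forall>k\<in>K. mat_mult D X (T k) = mat_mult D (T k) X"
  have "mat_mult D (mat_mult D (mat_adj (T k)) X) (T k) = mat_mult D (mat_mult D (mat_adj (T k)) (T k)) X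
      \<and> mat_mult D X (mat_mult D (mat_adj (T k)) (T k)) = mat_mult D (mat_mult D (mat_adj (T k)) (T k)) X"
    if k: "k \<in> K" for k
  proof -
    obtain k' where "k' \<in> K" "T k' = mat_adj (T k)" using adj k by blast
    then have "mat_mult D X (mat_adj (T k)) = mat_mult D (mat_adj (T k)) X" using comm by metis
    with comm k show ?thesis by (metis mat_mult_assoc)
  qed
  then show "lindbladian D K T c X = (\<lambda>x y. 0)"
    unfolding lindbladian_def by (intro ext sum.neutral) simp
next
  assume L0: "lindbladian D K T c X = (\<lambda>x y. 0)"
  then have L0': "lindbladian D K T c (mat_adj X) = (\<lambda>x y. 0)"
    by (simp add: lindbladian_mat_adj) (simp add: mat_adj_def)
  define A where "A = (\<lambda>x y. (1/2) * X x y + (1/2) * mat_adj X x y)"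
  define B where "B = (\<lambda>x y. (- \<i>/2) * X x y + (\<i>/2) * mat_adj X x y)"
  have "mat_on D A" "mat_on D B"
    using X unfolding A_def B_def mat_on_def mat_adj_def by auto
  moreover have "hermitian D A" "hermitian D B"
    unfolding hermitian_def A_def B_def mat_adj_def by (simp_all add: field_simps)
  moreover have "lindbladian D K T c A = (\<lambda>x y. 0)" "lindbladian D K T c B = (\<lambda>x y. 0)"
    unfolding A_def B_def lindbladian_lin L0 L0' by simp_all
  ultimately have AB: "\<forall>k\<in>K. mat_mult D A (T k) = mat_mult D (T k) A" "\<forall>k\<in>K. mat_mult D B (T k) = mat_mult D (T k) B"
    using lindbladian_hermitian_kernel[OF D K T c adj] by blast+
  have X_AB: "X = (\<lambda>x y. 1 * A x y + \<i> * B x y)"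
    unfolding A_def B_def by (intro ext) (simp add: field_simps)
  show "\<forall>k\<in>K. mat_mult D X (T k) = mat_mult D (T k) X"
    by (subst (1 2) X_AB, simp only: mat_mult_lin_left mat_mult_lin_right) (simp add: AB)
qed

section \<open>A \<open>*\<close>-algebra of matrices with trivial commutant contains all matrices\<close>

definition star_subalgebra :: "'a set \<Rightarrow> 'a cmat set \<Rightarrow> bool" where
  "star_subalgebra D M \<longleftrightarrow> (\<forall>A\<in>M. mat_on D A) \<and> mat_id D \<in> M
     \<and> (\<forall>A\<in>M. \<forall>B\<in>M. \<forall>a b. (\<lambda>x y. a * A x y + b * B x y) \<in> M)
     \<and> (\<forall>A\<in>M. \<forall>B\<in>M. mat_mult D A B \<in> M) \<and> (\<forall>A\<in>M. mat_adj A \<in> M)"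

definition hs_inner :: "'a set \<Rightarrow> 'a cmat \<Rightarrow> 'a cmat \<Rightarrow> complex" where
  "hs_inner D A B = (\<Sum>x\<in>D. \<Sum>y\<in>D. cnj (A x y) * B x y)"

definition matrix_unit :: "'a \<Rightarrow> 'a \<Rightarrow> 'a cmat" where
  "matrix_unit d c = (\<lambda>x y. if x = d \<and> y = c then 1 else 0)"

definition twirl :: "'a set \<Rightarrow> 'a cmat set \<Rightarrow> 'a cmat \<Rightarrow> 'a cmat" where
  "twirl D U Y = (\<lambda>x y. \<Sum>u\<in>U. mat_mult D (mat_mult D u Y) (mat_adj u) x y)"

lemma star_subalgebra_zero:
  assumes "star_subalgebra D M"
  shows "(\<lambda>x y. 0) \<in> M"
proof -
  have "(\<lambda>x y. 0 * mat_id D x y + 0 * mat_id D x y) \<in> M"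
    using assms unfolding star_subalgebra_def by blast
  then show ?thesis by simp
qed

lemma star_subalgebra_lin:
  "star_subalgebra D M \<Longrightarrow> A \<in> M \<Longrightarrow> B \<in> M \<Longrightarrow> (\<lambda>x y. a * A x y + b * B x y) \<in> M"
  unfolding star_subalgebra_def by blast

lemma star_subalgebra_sum:
  assumes M: "star_subalgebra D M" and K: "finite K" and F: "\<forall>k\<in>K. F k \<in> M"
  shows "(\<lambda>x y. \<Sum>k\<in>K. f k * F k x y) \<in> M"
  using K F
proof (induction K rule: finite_induct)
  case empty
  then show ?case using star_subalgebra_zero[OF M] by simp
next
  case (insert k K)
  then have "F k \<in> M" "(\<lambda>x y. \<Sum>k\<in>K. f k * F k x y) \<in> M"
    by simp_all
  from star_subalgebra_lin[OF M this, of "f k" 1] show ?case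
    using insert by simp
qed

lemma hs_inner_mat_adj_mat_mult:
  "hs_inner D A (mat_mult D (mat_adj C) B) = cnj (hs_inner D B (mat_mult D C A))"
proof -
  have "hs_inner D A (mat_mult D (mat_adj C) B) = (\<Sum>x\<in>D. \<Sum>y\<in>D. \<Sum>z\<in>D. cnj (A x y) * cnj (C z x) * B z y)"
    unfolding hs_inner_def mat_mult_def mat_adj_def by (simp only: sum_distrib_left mult.assoc)
  also have "\<dots> = (\<Sum>z\<in>D. \<Sum>y\<in>D. \<Sum>x\<in>D. cnj (A x y) * cnj (C z x) * B z y)"
    by (subst sum.swap, subst (1 2) sum.swap) (rule refl)
  also have "\<dots> = cnj (hs_inner D B (mat_mult D C A))"
    unfolding hs_inner_def mat_mult_def
    by (simp only: sum_distrib_left cnj_sum complex_cnj_mult complex_cnj_cnj mult_ac)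
  finally show ?thesis .
qed

lemma star_subalgebra_csubspace_pairs:
  assumes M: "star_subalgebra D M"
  shows "csubspace (D \<times> D) (case_prod ` M)" (is "csubspace _ ?M2")
  unfolding csubspace_def
proof (intro conjI ballI allI subsetI)
  show "v \<in> vecs_on (D \<times> D)" if "v \<in> ?M2" for v
    using that M unfolding star_subalgebra_def mat_on_def vecs_on_def by auto
  show "(\<lambda>x. 0) \<in> ?M2"
    using star_subalgebra_zero[OF M] by (auto intro: image_eqI[where x = "\<lambda>x y. 0"])
  show "(\<lambda>x. u x + v x) \<in> ?M2" if uv: "u \<in> ?M2" "v \<in> ?M2" for u v
  proof -
    obtain A B where "A \<in> M" "B \<in> M" "u = case_prod A" "v = case_prod B"
      using uv by blast
    then show ?thesis
      using star_subalgebra_lin[OF M, of A B 1 1]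
      by (intro image_eqI[where x = "\<lambda>x y. 1 * A x y + 1 * B x y"]) auto
  qed
  show "(\<lambda>x. c * u x) \<in> ?M2" if u: "u \<in> ?M2" for c u
  proof -
    obtain A where "A \<in> M" "u = case_prod A"
      using u by blast
    then show ?thesis
      using star_subalgebra_lin[OF M, of A A c 0]
      by (intro image_eqI[where x = "\<lambda>x y. c * A x y + 0 * A x y"]) auto
  qed
qed

text \<open>U is a Hilbert--Schmidt orthonormal basis of M, obtained by viewing matrices as vectors
  indexed by pairs; only the expansion property is needed later.\<close>

lemma star_subalgebra_hs_basis:
  assumes D: "finite D" and M: "star_subalgebra D M"
  obtains U where "finite U" "U \<subseteq> M" "\<forall>A\<in>M. A = (\<lambda>x y. \<Sum>u\<in>U. hs_inner D u A * u x y)"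
proof -
  obtain U2 where U2: "orthonormal_basis (D \<times> D) (case_prod ` M) U2"
    using orthonormal_basis_exists[OF _ star_subalgebra_csubspace_pairs[OF M]] D by blast
  have "finite U2" using U2 unfolding orthonormal_basis_def orthonormal_def by simp
  have "inj_on curry U2"
    by (rule inj_onI) (metis case_prod_curry)
  show ?thesis
  proof (rule that)
    show "finite (curry ` U2)"
      using \<open>finite U2\<close> by simp
    show "curry ` U2 \<subseteq> M"
      using U2 unfolding orthonormal_basis_def by force
    show "\<forall>A\<in>M. A = (\<lambda>x y. \<Sum>u\<in>curry ` U2. hs_inner D u A * u x y)"
    proof
      fix A assume "A \<in> M"
      then have expand: "case_prod A = lin_comb U2 (\<lambda>b. cinner (D \<times> D) b (case_prod A))"
        using U2 unfolding orthonormal_basis_def by blast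
      have "cinner (D \<times> D) b (case_prod A) = hs_inner D (curry b) A" for b
        unfolding cinner_def hs_inner_def sum.cartesian_product by (rule sum.cong) auto
      then have cp: "case_prod A = (\<lambda>p. \<Sum>b\<in>U2. hs_inner D (curry b) A * b p)"
        using expand unfolding lin_comb_def by simp
      have "A x y = (\<Sum>b\<in>U2. hs_inner D (curry b) A * curry b x y)" for x y
        using fun_cong[OF cp, of "(x, y)"] by simp
      then show "A = (\<lambda>x y. \<Sum>u\<in>curry ` U2. hs_inner D u A * u x y)"
        using \<open>inj_on curry U2\<close> by (simp add: sum.reindex fun_eq_iff)
    qed
  qed
qed

lemma twirl_commutes:
  assumes M: "star_subalgebra D M" and U: "U \<subseteq> M"
    and expand: "\<forall>A\<in>M. A = (\<lambda>x y. \<Sum>u\<in>U. hs_inner D u A * u x y)" and A: "A \<in> M"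
  shows "mat_mult D A (twirl D U Y) = mat_mult D (twirl D U Y) A"
proof -
  define \<alpha> where "\<alpha> u' u = hs_inner D u' (mat_mult D A u)" for u' u
  have closed: "mat_mult D A u \<in> M" "mat_mult D (mat_adj A) u \<in> M" if "u \<in> U" for u
    using M A U that unfolding star_subalgebra_def by blast+
  have A_u: "mat_mult D A u = (\<lambda>x y. \<Sum>u'\<in>U. \<alpha> u' u * u' x y)" if "u \<in> U" for u
    unfolding \<alpha>_def using expand closed(1)[OF that] by blast
  have A'_u: "mat_mult D (mat_adj A) u' = (\<lambda>x y. \<Sum>u\<in>U. cnj (\<alpha> u' u) * u x y)" if "u' \<in> U" for u'
    unfolding \<alpha>_def hs_inner_mat_adj_mat_mult[symmetric] using expand closed(2)[OF that] by blast
  have "mat_mult D A (twirl D U Y)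
      = (\<lambda>x y. \<Sum>u\<in>U. mat_mult D (mat_mult D (mat_mult D A u) Y) (mat_adj u) x y)"
    unfolding twirl_def mat_mult_sum_right' mat_mult_assoc ..
  also have "\<dots> = (\<lambda>x y. \<Sum>u\<in>U. \<Sum>u'\<in>U. \<alpha> u' u * mat_mult D (mat_mult D u' Y) (mat_adj u) x y)"
    by (intro ext sum.cong refl) (simp add: A_u mat_mult_sum_left)
  also have "\<dots> = (\<lambda>x y. \<Sum>u'\<in>U. \<Sum>u\<in>U. \<alpha> u' u * mat_mult D (mat_mult D u' Y) (mat_adj u) x y)"
    by (intro ext, rule sum.swap)
  also have "\<dots> = (\<lambda>x y. \<Sum>u'\<in>U. mat_mult D (mat_mult D u' Y) (mat_adj (mat_mult D (mat_adj A) u')) x y)"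
    by (intro ext sum.cong refl) (simp add: A'_u mat_adj_sum mat_mult_sum_right)
  also have "\<dots> = mat_mult D (twirl D U Y) A"
    unfolding twirl_def mat_mult_sum_left' mat_adj_mat_mult mat_adj_mat_adj mat_mult_assoc ..
  finally show ?thesis .
qed

lemma twirl_matrix_unit:
  assumes D: "finite D" and "b \<in> D" "c \<in> D"
  shows "twirl D U (matrix_unit b c) x y = (\<Sum>u\<in>U. u x b * cnj (u y c))"
proof -
  have "mat_mult D u (matrix_unit b c) x w = (if w = c then u x b else 0)" for u x w
    unfolding mat_mult_def matrix_unit_def using D assms(2)
    by (simp add: if_distrib[of "\<lambda>t. _ * t"] sum.delta' cong: if_cong)
  then have "mat_mult D (mat_mult D u (matrix_unit b c)) (mat_adj u) x y = u x b * cnj (u y c)" for u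
    unfolding mat_mult_def[of D "mat_mult D u (matrix_unit b c)"] mat_adj_def
    using D assms(3) by (simp add: if_distrib[of "\<lambda>t. t * _"] sum.delta cong: if_cong)
  then show ?thesis
    unfolding twirl_def by simp
qed

text \<open>The twirl of a matrix unit commutes with M, hence is a scalar.\<close>

lemma twirl_matrix_unit_diagonal:
  assumes D: "finite D" and M: "star_subalgebra D M" and U: "U \<subseteq> M"
    and expand: "\<forall>A\<in>M. A = (\<lambda>x y. \<Sum>u\<in>U. hs_inner D u A * u x y)"
    and trivial: "\<forall>Z. mat_on D Z \<longrightarrow> (\<forall>A\<in>M. mat_mult D Z A = mat_mult D A Z) \<longrightarrow> (\<exists>\<kappa>. Z = (\<lambda>x y. \<kappa> * mat_id D x y))"
    and in_D: "b \<in> D" "c \<in> D" "x \<in> D" "y \<in> D"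
  shows "(\<Sum>u\<in>U. u x b * cnj (u y c)) = (if x = y then (\<Sum>u\<in>U. u b b * cnj (u b c)) else 0)"
proof -
  have "twirl D U (matrix_unit b c) \<in> {Z. mat_on D Z}"
    using M U unfolding twirl_def star_subalgebra_def
    by (auto simp: mat_on_def mat_mult_def mat_adj_def intro!: sum.neutral)
  moreover have "\<forall>A\<in>M. mat_mult D (twirl D U (matrix_unit b c)) A = mat_mult D A (twirl D U (matrix_unit b c))"
    using twirl_commutes[OF M U expand] by metis
  ultimately obtain \<kappa> where "twirl D U (matrix_unit b c) = (\<lambda>x y. \<kappa> * mat_id D x y)"
    using trivial by blast
  then show ?thesis
    using in_D twirl_matrix_unit[OF D in_D(1,2)] unfolding mat_id_def by (simp add: fun_eq_iff)
qed

text \<open>The normalisation comes from the expansion of the identity in the basis U.\<close>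

lemma twirl_matrix_unit_trace:
  assumes D: "finite D" and M: "star_subalgebra D M" and U: "U \<subseteq> M"
    and expand: "\<forall>A\<in>M. A = (\<lambda>x y. \<Sum>u\<in>U. hs_inner D u A * u x y)"
    and trivial: "\<forall>Z. mat_on D Z \<longrightarrow> (\<forall>A\<in>M. mat_mult D Z A = mat_mult D A Z) \<longrightarrow> (\<exists>\<kappa>. Z = (\<lambda>x y. \<kappa> * mat_id D x y))"
    and a: "a \<in> D" and c: "c \<in> D"
  shows "(\<Sum>u\<in>U. u a a * cnj (u a c)) = (if a = c then 1 else 0)"
proof -
  note diagonal = twirl_matrix_unit_diagonal[OF D M U expand trivial]
  have "(\<Sum>u\<in>U. u a a * cnj (u a c)) = (\<Sum>b\<in>D. \<Sum>u\<in>U. u b b * cnj (u a c))"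
  proof -
    have "(\<Sum>b\<in>D. \<Sum>u\<in>U. u b b * cnj (u a c)) = (\<Sum>b\<in>D. if b = a then \<Sum>u\<in>U. u a a * cnj (u a c) else 0)"
      using diagonal[OF _ c _ a] by (intro sum.cong) auto
    then show ?thesis
      using D a by simp
  qed
  also have "\<dots> = cnj (\<Sum>u\<in>U. hs_inner D u (mat_id D) * u a c)"
    unfolding hs_inner_def mat_id_def using D
    by (subst sum.swap) (simp add: cnj_sum sum_distrib_left sum_distrib_right mult.commute if_distrib sum.delta cong: if_cong)
  also have "\<dots> = cnj (mat_id D a c)"
  proof -
    have "mat_id D = (\<lambda>x y. \<Sum>u\<in>U. hs_inner D u (mat_id D) * u x y)"
      using expand M unfolding star_subalgebra_def by blast
    from fun_cong[OF fun_cong[OF this, of a], of c] show ?thesis by simp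
  qed
  finally show ?thesis
    using a unfolding mat_id_def by simp
qed

text \<open>The expansion of a matrix unit in the basis of M returns the matrix unit itself.\<close>

lemma star_subalgebra_matrix_unit:
  assumes D: "finite D" and M: "star_subalgebra D M"
    and trivial: "\<forall>Z. mat_on D Z \<longrightarrow> (\<forall>A\<in>M. mat_mult D Z A = mat_mult D A Z) \<longrightarrow> (\<exists>\<kappa>. Z = (\<lambda>x y. \<kappa> * mat_id D x y))"
    and d: "d \<in> D" and c: "c \<in> D"
  shows "matrix_unit d c \<in> M"
proof -
  obtain U where "finite U" "U \<subseteq> M" and expand: "\<forall>A\<in>M. A = (\<lambda>x y. \<Sum>u\<in>U. hs_inner D u A * u x y)"
    using star_subalgebra_hs_basis[OF D M] by blast
  define P where "P = (\<lambda>x y. \<Sum>u\<in>U. hs_inner D u (matrix_unit d c) * u x y)"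
  have "P \<in> M"
    unfolding P_def by (rule star_subalgebra_sum[OF M \<open>finite U\<close>]) (use \<open>U \<subseteq> M\<close> in blast)
  moreover have "P = matrix_unit d c"
  proof (intro ext)
    fix x y
    have "hs_inner D u (matrix_unit d c) = cnj (u d c)" for u
    proof -
      have "hs_inner D u (matrix_unit d c) = (\<Sum>x\<in>D. if x = d then cnj (u d c) else 0)"
        unfolding hs_inner_def matrix_unit_def using D c
        by (intro sum.cong) (auto simp: if_distrib[of "\<lambda>t. _ * t"] sum.delta' cong: if_cong)
      then show ?thesis using D d by simp
    qed
    then have P_xy: "P x y = (\<Sum>u\<in>U. u x y * cnj (u d c))"
      unfolding P_def by (simp add: mult.commute)
    show "P x y = matrix_unit d c x y"
    proof (cases "x \<in> D \<and> y \<in> D")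
      case True
      then show ?thesis
        unfolding P_xy matrix_unit_def
        using twirl_matrix_unit_diagonal[OF D M \<open>U \<subseteq> M\<close> expand trivial _ c _ d]
          twirl_matrix_unit_trace[OF D M \<open>U \<subseteq> M\<close> expand trivial _ c]
        by auto
    next
      case False
      then have "u x y = 0" if "u \<in> U" for u
        using \<open>U \<subseteq> M\<close> M that unfolding star_subalgebra_def mat_on_def by blast
      then show ?thesis
        unfolding P_xy matrix_unit_def using False d c by auto
    qed
  qed
  ultimately show ?thesis by simp
qed

theorem star_subalgebra_full:
  assumes D: "finite D" and M: "star_subalgebra D M"
    and trivial: "\<forall>Z. mat_on D Z \<longrightarrow> (\<forall>A\<in>M. mat_mult D Z A = mat_mult D A Z) \<longrightarrow> (\<exists>\<kappa>. Z = (\<lambda>x y. \<kappa> * mat_id D x y))"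
    and Y: "mat_on D Y"
  shows "Y \<in> M"
proof -
  have "(\<lambda>x y. \<Sum>p\<in>D \<times> D. Y (fst p) (snd p) * matrix_unit (fst p) (snd p) x y) \<in> M"
    by (rule star_subalgebra_sum[OF M]) (use D star_subalgebra_matrix_unit[OF D M trivial] in auto)
  moreover have "(\<lambda>x y. \<Sum>p\<in>D \<times> D. Y (fst p) (snd p) * matrix_unit (fst p) (snd p) x y) = Y"
  proof (intro ext)
    fix x y
    have "(\<Sum>p\<in>D \<times> D. Y (fst p) (snd p) * matrix_unit (fst p) (snd p) x y)
        = (\<Sum>p\<in>D \<times> D. if p = (x, y) then Y x y else 0)"
      unfolding matrix_unit_def by (intro sum.cong) auto
    then show "(\<Sum>p\<in>D \<times> D. Y (fst p) (snd p) * matrix_unit (fst p) (snd p) x y) = Y x y"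
      using D Y unfolding mat_on_def by auto
  qed
  ultimately show ?thesis by simp
qed

section \<open>Bohr frequency components\<close>

definition bohr_part :: "'a set \<Rightarrow> real set \<Rightarrow> (real \<Rightarrow> 'a cmat) \<Rightarrow> 'a cmat \<Rightarrow> real \<Rightarrow> 'a cmat" where
  "bohr_part D ev P Q \<omega> = (\<lambda>x y. \<Sum>l\<in>ev. \<Sum>l'\<in>ev.
      if l - l' = \<omega> then mat_mult D (mat_mult D (P l) Q) (P l') x y else 0)"

lemma finite_bohr: "finite ev \<Longrightarrow> finite (bohr ev)"
proof -
  assume "finite ev"
  have "bohr ev = (\<lambda>(a, b). a - b) ` (ev \<times> ev)" unfolding bohr_def by auto
  then show ?thesis using \<open>finite ev\<close> by simp
qed

lemma bohr_uminus: "\<omega> \<in> bohr ev \<Longrightarrow> - \<omega> \<in> bohr ev"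
  unfolding bohr_def by force

lemma bohr_part_nonbohr: "\<omega> \<notin> bohr ev \<Longrightarrow> bohr_part D ev P Q \<omega> = (\<lambda>x y. 0)"
  unfolding bohr_part_def bohr_def by (intro ext sum.neutral ballI) auto

lemma bohr_part_lin:
  "bohr_part D ev P (\<lambda>x y. a * Q1 x y + b * Q2 x y) \<omega>
    = (\<lambda>x y. a * bohr_part D ev P Q1 \<omega> x y + b * bohr_part D ev P Q2 \<omega> x y)"
  unfolding bohr_part_def mat_mult_lin_left mat_mult_lin_right
  by (intro ext, simp only: sum_distrib_left sum.distrib[symmetric], intro sum.cong refl) simp

locale spectral_resolution =
  fixes D :: "'a set" and ev :: "real set" and P :: "real \<Rightarrow> 'a cmat"
  assumes finite_D: "finite D" and finite_ev: "finite ev"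
    and P_mat_on: "\<And>l. l \<in> ev \<Longrightarrow> mat_on D (P l)"
    and P_adj: "\<And>l. l \<in> ev \<Longrightarrow> mat_adj (P l) = P l"
    and P_idem: "\<And>l. l \<in> ev \<Longrightarrow> mat_mult D (P l) (P l) = P l"
    and P_orth: "\<And>l m. l \<in> ev \<Longrightarrow> m \<in> ev \<Longrightarrow> l \<noteq> m \<Longrightarrow> mat_mult D (P l) (P m) = (\<lambda>x y. 0)"
    and P_sum: "(\<lambda>x y. \<Sum>l\<in>ev. P l x y) = mat_id D"
begin

definition block :: "real \<Rightarrow> real \<Rightarrow> 'a cmat \<Rightarrow> 'a cmat" where
  "block l m Q = mat_mult D (mat_mult D (P l) Q) (P m)"

lemma bohr_part_mat_on: "mat_on D (bohr_part D ev P Q \<omega>)"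
  unfolding mat_on_def bohr_part_def
proof (intro allI impI sum.neutral ballI)
  fix x y l l' assume "x \<notin> D \<or> y \<notin> D" "l \<in> ev" "l' \<in> ev"
  then show "(if l - l' = \<omega> then mat_mult D (mat_mult D (P l) Q) (P l') x y else 0) = 0"
    using P_mat_on unfolding mat_on_def mat_mult_def by auto
qed

lemma bohr_part_mat_adj: "mat_adj (bohr_part D ev P Q \<omega>) = bohr_part D ev P (mat_adj Q) (- \<omega>)"
proof (intro ext)
  fix x y
  have "mat_adj (bohr_part D ev P Q \<omega>) x y
      = (\<Sum>l\<in>ev. \<Sum>l'\<in>ev. if l - l' = \<omega> then mat_adj (mat_mult D (mat_mult D (P l) Q) (P l')) x y else 0)"
    unfolding bohr_part_def by (simp add: mat_adj_def cnj_sum if_distrib cong: if_cong)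
  also have "\<dots> = (\<Sum>l\<in>ev. \<Sum>l'\<in>ev. if l - l' = \<omega> then mat_mult D (mat_mult D (P l') (mat_adj Q)) (P l) x y else 0)"
    by (intro sum.cong refl) (simp add: P_adj mat_adj_mat_mult mat_mult_assoc)
  also have "\<dots> = bohr_part D ev P (mat_adj Q) (- \<omega>) x y"
    unfolding bohr_part_def by (subst sum.swap) (intro sum.cong refl, auto)
  finally show "mat_adj (bohr_part D ev P Q \<omega>) x y = bohr_part D ev P (mat_adj Q) (- \<omega>) x y" .
qed

lemma bohr_part_mat_id: "bohr_part D ev P (mat_id D) \<omega> = (if \<omega> = 0 then mat_id D else (\<lambda>x y. 0))"
proof -
  have PP: "mat_mult D (mat_mult D (P l) (mat_id D)) (P l') = (if l = l' then P l else (\<lambda>x y. 0))"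
    if "l \<in> ev" "l' \<in> ev" for l l'
    using P_idem P_orth that by (simp add: mat_mult_mat_id_right[OF P_mat_on finite_D])
  show ?thesis
  proof (cases "\<omega> = 0")
    case True
    have "bohr_part D ev P (mat_id D) \<omega> = (\<lambda>x y. \<Sum>l\<in>ev. \<Sum>l'\<in>ev. if l' = l then P l x y else 0)"
      unfolding bohr_part_def using True PP by (intro ext sum.cong refl) auto
    then show ?thesis
      using True finite_ev P_sum by simp
  next
    case False
    then show ?thesis
      unfolding bohr_part_def using PP by (intro ext sum.neutral ballI) auto
  qed
qed

lemma block_mat_mult_block:
  assumes "m \<in> ev" "m' \<in> ev"
  shows "mat_mult D (block l m Q1) (block m' l' Q2)
       = (if m = m' then mat_mult D (mat_mult D (P l) Q1) (mat_mult D (P m) (mat_mult D Q2 (P l'))) else (\<lambda>x y. 0))"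
proof -
  have "mat_mult D (block l m Q1) (block m' l' Q2)
      = mat_mult D (mat_mult D (P l) Q1) (mat_mult D (mat_mult D (P m) (P m')) (mat_mult D Q2 (P l')))"
    unfolding block_def by (simp only: mat_mult_assoc)
  then show ?thesis
    using assms P_idem P_orth by auto
qed

lemma sum_block_mat_mult_block:
  assumes l: "l \<in> ev" and Q1: "mat_on D Q1"
  shows "(\<lambda>x y. \<Sum>m\<in>ev. mat_mult D (block l m Q1) (block m l' Q2) x y) = block l l' (mat_mult D Q1 Q2)"
proof -
  have "mat_mult D (block l m Q1) (block m l' Q2)
      = mat_mult D (mat_mult D (P l) Q1) (mat_mult D (P m) (mat_mult D Q2 (P l')))" if "m \<in> ev" for m
    using block_mat_mult_block[OF that that] by simp
  then have "(\<lambda>x y. \<Sum>m\<in>ev. mat_mult D (block l m Q1) (block m l' Q2) x y)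
      = (\<lambda>x y. \<Sum>m\<in>ev. mat_mult D (mat_mult D (P l) Q1) (mat_mult D (P m) (mat_mult D Q2 (P l'))) x y)"
    by (intro ext sum.cong refl) simp
  also have "\<dots> = mat_mult D (mat_mult D (P l) Q1) (mat_mult D (\<lambda>x y. \<Sum>m\<in>ev. P m x y) (mat_mult D Q2 (P l')))"
    by (simp only: mat_mult_sum_right' mat_mult_sum_left')
  also have "\<dots> = mat_mult D (mat_mult D (mat_mult D (P l) Q1) (mat_id D)) (mat_mult D Q2 (P l'))"
    unfolding P_sum mat_mult_assoc ..
  also have "\<dots> = block l l' (mat_mult D Q1 Q2)"
    unfolding block_def mat_mult_mat_id_right[OF mat_on_mat_mult[OF P_mat_on[OF l] Q1] finite_D]
    by (simp only: mat_mult_assoc)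
  finally show ?thesis .
qed

end

lemma mat_mult_if_left: "mat_mult D (\<lambda>x y. if c then A x y else 0) B = (\<lambda>x y. if c then mat_mult D A B x y else 0)"
  unfolding mat_mult_def by (cases c) simp_all

lemma mat_mult_if_right: "mat_mult D A (\<lambda>x y. if c then B x y else 0) = (\<lambda>x y. if c then mat_mult D A B x y else 0)"
  unfolding mat_mult_def by (cases c) simp_all

context spectral_resolution
begin

lemma mat_mult_bohr_part:
  "mat_mult D (bohr_part D ev P Q1 \<omega>1) (bohr_part D ev P Q2 \<omega>2)
   = (\<lambda>x y. \<Sum>l\<in>ev. \<Sum>m\<in>ev. \<Sum>l'\<in>ev.
        if l - m = \<omega>1 \<and> m - l' = \<omega>2 then mat_mult D (block l m Q1) (block m l' Q2) x y else 0)"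
proof -
  have "mat_mult D (bohr_part D ev P Q1 \<omega>1) (bohr_part D ev P Q2 \<omega>2)
      = (\<lambda>x y. \<Sum>l\<in>ev. \<Sum>m\<in>ev. \<Sum>m'\<in>ev. \<Sum>l'\<in>ev.
          if l - m = \<omega>1 \<and> m' - l' = \<omega>2 then mat_mult D (block l m Q1) (block m' l' Q2) x y else 0)"
    unfolding bohr_part_def block_def[symmetric]
    by (simp only: mat_mult_sum_left' mat_mult_sum_right' mat_mult_if_left mat_mult_if_right if_if_eq_conj)
  also have "\<dots> = (\<lambda>x y. \<Sum>l\<in>ev. \<Sum>m\<in>ev. \<Sum>m'\<in>ev. if m' = m then \<Sum>l'\<in>ev.
          if l - m = \<omega>1 \<and> m' - l' = \<omega>2 then mat_mult D (block l m Q1) (block m' l' Q2) x y else 0 else 0)"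
    by (intro ext sum.cong refl) (auto simp: block_mat_mult_block intro!: sum.neutral)
  finally show ?thesis
    using finite_ev by simp
qed

theorem bohr_part_mat_mult:
  assumes Q1: "mat_on D Q1"
  shows "bohr_part D ev P (mat_mult D Q1 Q2) \<omega>
       = (\<lambda>x y. \<Sum>\<omega>1\<in>bohr ev. mat_mult D (bohr_part D ev P Q1 \<omega>1) (bohr_part D ev P Q2 (\<omega> - \<omega>1)) x y)"
proof (intro ext)
  fix x y
  let ?B = "\<lambda>l m l'. mat_mult D (block l m Q1) (block m l' Q2) x y"
  have "(\<Sum>\<omega>1\<in>bohr ev. mat_mult D (bohr_part D ev P Q1 \<omega>1) (bohr_part D ev P Q2 (\<omega> - \<omega>1)) x y)
      = (\<Sum>l\<in>ev. \<Sum>m\<in>ev. \<Sum>l'\<in>ev. \<Sum>\<omega>1\<in>bohr ev.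
           if \<omega>1 = l - m then (if l - l' = \<omega> then ?B l m l' else 0) else 0)"
    unfolding mat_mult_bohr_part
    by (subst sum.swap, rule sum.cong[OF refl], subst sum.swap, rule sum.cong[OF refl],
        subst sum.swap, rule sum.cong[OF refl], rule sum.cong[OF refl]) auto
  also have "\<dots> = (\<Sum>l\<in>ev. \<Sum>m\<in>ev. \<Sum>l'\<in>ev. if l - l' = \<omega> then ?B l m l' else 0)"
  proof -
    have "l - m \<in> bohr ev" if "l \<in> ev" "m \<in> ev" for l m
      using that unfolding bohr_def by blast
    then show ?thesis
      using finite_bohr[OF finite_ev] by (intro sum.cong refl) simp
  qed
  also have "\<dots> = (\<Sum>l\<in>ev. \<Sum>l'\<in>ev. if l - l' = \<omega> then (\<Sum>m\<in>ev. ?B l m l') else 0)"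
    by (rule sum.cong[OF refl], subst sum.swap, rule sum.cong[OF refl]) simp
  also have "\<dots> = bohr_part D ev P (mat_mult D Q1 Q2) \<omega> x y"
    unfolding bohr_part_def
    using fun_cong[OF fun_cong[OF sum_block_mat_mult_block[OF _ Q1]]]
    by (intro sum.cong refl) (simp add: block_def)
  finally show "bohr_part D ev P (mat_mult D Q1 Q2) \<omega> x y
      = (\<Sum>\<omega>1\<in>bohr ev. mat_mult D (bohr_part D ev P Q1 \<omega>1) (bohr_part D ev P Q2 (\<omega> - \<omega>1)) x y)" ..
qed

definition bohr_commutant :: "'a cmat set \<Rightarrow> 'a cmat set" where
  "bohr_commutant Xs = {Q. mat_on D Q \<and>
     (\<forall>\<omega>. \<forall>Z\<in>Xs. mat_mult D Z (bohr_part D ev P Q \<omega>) = mat_mult D (bohr_part D ev P Q \<omega>) Z)}"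

text \<open>Xs must be closed under adjoints because \<open>bohr_part_mat_adj\<close> exchanges \<open>\<omega>\<close> and
  \<open>-\<omega>\<close>.\<close>

theorem bohr_commutant_star_subalgebra:
  assumes Xs: "\<forall>Z\<in>Xs. mat_on D Z" "\<forall>Z\<in>Xs. mat_adj Z \<in> Xs"
  shows "star_subalgebra D (bohr_commutant Xs)"
  unfolding star_subalgebra_def
proof (intro conjI ballI allI)
  show "mat_on D Q" if "Q \<in> bohr_commutant Xs" for Q
    using that unfolding bohr_commutant_def by blast
  have "mat_mult D Z (mat_id D) = mat_mult D (mat_id D) Z" if "Z \<in> Xs" for Z
    using Xs that by (simp add: mat_mult_mat_id_left mat_mult_mat_id_right finite_D)
  then show "mat_id D \<in> bohr_commutant Xs"
    by (auto simp: bohr_commutant_def bohr_part_mat_id mat_on_mat_id)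
  fix A B assume A: "A \<in> bohr_commutant Xs" and B: "B \<in> bohr_commutant Xs"
  then have A_on: "mat_on D A" and B_on: "mat_on D B"
    and A_comm: "\<And>\<omega> Z. Z \<in> Xs \<Longrightarrow> mat_mult D Z (bohr_part D ev P A \<omega>) = mat_mult D (bohr_part D ev P A \<omega>) Z"
    and B_comm: "\<And>\<omega> Z. Z \<in> Xs \<Longrightarrow> mat_mult D Z (bohr_part D ev P B \<omega>) = mat_mult D (bohr_part D ev P B \<omega>) Z"
    unfolding bohr_commutant_def by blast+
  show "(\<lambda>x y. a * A x y + b * B x y) \<in> bohr_commutant Xs" for a b
    using A_on B_on A_comm B_comm
    by (simp add: bohr_commutant_def bohr_part_lin mat_mult_lin_left mat_mult_lin_right mat_on_def)
  have "mat_mult D Z (mat_mult D (bohr_part D ev P A \<omega>1) (bohr_part D ev P B \<omega>2))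
      = mat_mult D (mat_mult D (bohr_part D ev P A \<omega>1) (bohr_part D ev P B \<omega>2)) Z" if "Z \<in> Xs" for Z \<omega>1 \<omega>2
    using A_comm[OF that] B_comm[OF that] by (metis mat_mult_assoc)
  then show "mat_mult D A B \<in> bohr_commutant Xs"
    using mat_on_mat_mult[OF A_on B_on]
    by (simp add: bohr_commutant_def bohr_part_mat_mult[OF A_on] mat_mult_sum_left' mat_mult_sum_right')
next
  fix A assume "A \<in> bohr_commutant Xs"
  then have A_on: "mat_on D A"
    and A_comm: "\<And>\<omega> Z. Z \<in> Xs \<Longrightarrow> mat_mult D Z (bohr_part D ev P A \<omega>) = mat_mult D (bohr_part D ev P A \<omega>) Z"
    unfolding bohr_commutant_def by blast+
  have "mat_mult D Z (bohr_part D ev P (mat_adj A) \<omega>) = mat_mult D (bohr_part D ev P (mat_adj A) \<omega>) Z"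
    if "Z \<in> Xs" for Z \<omega>
  proof -
    have "mat_mult D Z (bohr_part D ev P (mat_adj A) \<omega>) = mat_adj (mat_mult D (bohr_part D ev P A (- \<omega>)) (mat_adj Z))"
      using bohr_part_mat_adj[of A "- \<omega>"] by (simp add: mat_adj_mat_mult)
    also have "\<dots> = mat_adj (mat_mult D (mat_adj Z) (bohr_part D ev P A (- \<omega>)))"
      using A_comm Xs(2) that by simp
    also have "\<dots> = mat_mult D (bohr_part D ev P (mat_adj A) \<omega>) Z"
      using bohr_part_mat_adj[of A "- \<omega>"] by (simp add: mat_adj_mat_mult)
    finally show ?thesis .
  qed
  then show "mat_adj A \<in> bohr_commutant Xs"
    unfolding bohr_commutant_def using mat_on_mat_adj[OF A_on] by blast
qed


lemma bohr_commutant_adjoint_pair: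
  assumes Q: "mat_on D Q"
    and comm: "\<And>\<omega>. \<omega> \<in> bohr ev \<Longrightarrow>
      mat_mult D X (bohr_part D ev P Q \<omega>) = mat_mult D (bohr_part D ev P Q \<omega>) X"
    and comm_adj: "\<And>\<omega>. \<omega> \<in> bohr ev \<Longrightarrow>
      mat_mult D X (bohr_part D ev P (mat_adj Q) \<omega>) = mat_mult D (bohr_part D ev P (mat_adj Q) \<omega>) X"
  shows "Q \<in> bohr_commutant {X, mat_adj X}"
proof -
  have "mat_mult D Z (bohr_part D ev P Q \<omega>) = mat_mult D (bohr_part D ev P Q \<omega>) Z"
    if "Z \<in> {X, mat_adj X}" for Z \<omega>
  proof (cases "\<omega> \<in> bohr ev")
    case True
    have "mat_adj (bohr_part D ev P (mat_adj Q) (- \<omega>)) = bohr_part D ev P Q \<omega>"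
      by (simp add: bohr_part_mat_adj)
    then show ?thesis
      using that comm[OF True] mat_adj_commute[OF comm_adj[OF bohr_uminus[OF True]]] by auto
  qed (simp add: bohr_part_nonbohr)
  then show ?thesis
    unfolding bohr_commutant_def using Q by blast
qed
end

section \<open>Operators on configurations of the torus\<close>

lemma finite_conf: "finite V \<Longrightarrow> finite (conf V :: (edge \<Rightarrow> 'g::{zero,finite}) set)"
proof (induction V rule: finite_induct)
  case empty
  have "conf {} = {(\<lambda>e. 0) :: edge \<Rightarrow> 'g}" unfolding conf_def by auto
  then show ?case by simp
next
  case (insert e V)
  have "conf (insert e V) \<subseteq> (\<lambda>(g, \<sigma>). \<sigma>(e := g)) ` (UNIV \<times> (conf V :: (edge \<Rightarrow> 'g) set))"
  proof
    fix \<sigma> :: "edge \<Rightarrow> 'g" assume "\<sigma> \<in> conf (insert e V)"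
    then have "\<sigma>(e := 0) \<in> conf V" unfolding conf_def by auto
    then show "\<sigma> \<in> (\<lambda>(g, \<sigma>). \<sigma>(e := g)) ` (UNIV \<times> conf V)"
      by (intro image_eqI[where x = "(\<sigma> e, \<sigma>(e := 0))"]) auto
  qed
  then show ?case using insert finite_subset by fastforce
qed

lemma finite_torus_edges: "finite (torus_edges N)"
proof -
  have "torus_edges N \<subseteq> {..<N} \<times> {..<N} \<times> (UNIV :: bool set)"
    unfolding torus_edges_def by auto
  then show ?thesis by (rule finite_subset) simp
qed

lemma opmul_eq_mat_mult: "opmul L = mat_mult (conf L)"
  unfolding opmul_def mat_mult_def by (intro ext) simp

lemma adj_eq_mat_adj: "adj = mat_adj"
  unfolding adj_def mat_adj_def by (intro ext) simp

lemma idop_eq_mat_id: "idop L = mat_id (conf L)"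
  unfolding idop_def mat_id_def by (intro ext) auto

lemma ops_eq_mat_on: "A \<in> ops L \<longleftrightarrow> mat_on (conf L) A"
  unfolding ops_def mat_on_def by simp

lemma freq_eq_bohr_part: "freq L ev P Q \<omega> = bohr_part (conf L) ev P Q \<omega>"
  unfolding freq_def bohr_part_def opmul_eq_mat_mult ..

lemma spectral_decomp_resolution:
  fixes P :: "real \<Rightarrow> ('g::{zero,finite}) op"
  assumes L: "finite L" and spec: "spectral_decomp L H ev P"
  shows "spectral_resolution (conf L) ev P"
proof
  show "finite (conf L :: (edge \<Rightarrow> 'g) set)"
    by (rule finite_conf[OF L])
qed (use spec in \<open>auto simp: spectral_decomp_def opmul_eq_mat_mult adj_eq_mat_adj idop_eq_mat_id ops_eq_mat_on\<close>)

lemma restr_conf: "restr x V \<in> conf V"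
  unfolding restr_def conf_def by auto

lemma conf_outside: "x \<in> conf L \<Longrightarrow> e \<notin> L \<Longrightarrow> x e = 0"
  unfolding conf_def by blast

lemma embed_mat_on: "mat_on (conf L) (embed L V a)"
  unfolding embed_def mat_on_def by auto

lemma embed_mat_adj: "mat_adj (embed L V a) = embed L V (mat_adj a)"
  unfolding embed_def mat_adj_def by (intro ext) auto

lemma embed_lin:
  "embed L V (\<lambda>x y. c * a x y + d * b x y) = (\<lambda>x y. c * embed L V a x y + d * embed L V b x y)"
  unfolding embed_def by (intro ext) auto

lemma embed_restrict: "embed L V (\<lambda>a b. if a \<in> conf V \<and> b \<in> conf V then s a b else 0) = embed L V s"
  unfolding embed_def using restr_conf by (intro ext) auto

lemma embed_mat_id:
  assumes "V \<subseteq> L"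
  shows "embed L V (mat_id (conf V)) = mat_id (conf L)"
proof (intro ext)
  fix x y :: "edge \<Rightarrow> 'g::zero"
  show "embed L V (mat_id (conf V)) x y = mat_id (conf L) x y"
  proof (cases "x \<in> conf L \<and> y \<in> conf L \<and> (\<forall>e\<in>L - V. x e = y e)")
    case True
    then have "x e = y e" if "restr x V = restr y V" for e
      using fun_cong[OF that, of e] conf_outside[of x L e] conf_outside[of y L e] unfolding restr_def
      by (cases "e \<in> V"; cases "e \<in> L") auto
    then have "restr x V = restr y V \<longleftrightarrow> x = y" by auto
    then show ?thesis
      using True restr_conf[of x V] unfolding embed_def mat_id_def by auto
  next
    case False
    then show ?thesis unfolding embed_def mat_id_def by auto
  qed
qed

lemma embed_embed:
  fixes s :: "('g::zero) op"
  assumes e: "e \<in> R" and R: "R \<subseteq> L"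
  shows "embed L R (embed R {e} s) = embed L {e} s"
proof (intro ext)
  fix x y :: "edge \<Rightarrow> 'g::zero"
  have "restr (restr x R) {e} = restr x {e}" for x :: "edge \<Rightarrow> 'g"
    unfolding restr_def using e by auto
  moreover have "((\<forall>f\<in>L - R. x f = y f) \<and> (\<forall>f\<in>R - {e}. restr x R f = restr y R f))
      \<longleftrightarrow> (\<forall>f\<in>L - {e}. x f = y f)"
    using e R unfolding restr_def by auto
  ultimately show "embed L R (embed R {e} s) x y = embed L {e} s x y"
    unfolding embed_def using restr_conf[of x R] restr_conf[of y R] by auto
qed

text \<open>The configurations agreeing with x outside V correspond to \<open>conf V\<close> via
  \<open>restr _ V\<close>, with inverse \<open>\<lambda>w e. if e \<in> V then w e else x e\<close>.\<close>

lemma embed_mat_mult: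
  fixes a b :: "('g::{zero,finite}) op"
  assumes V: "V \<subseteq> L" and L: "finite L"
  shows "embed L V (mat_mult (conf V) a b) = mat_mult (conf L) (embed L V a) (embed L V b)"
proof (intro ext)
  fix x y :: "edge \<Rightarrow> 'g"
  show "embed L V (mat_mult (conf V) a b) x y = mat_mult (conf L) (embed L V a) (embed L V b) x y"
  proof (cases "x \<in> conf L \<and> y \<in> conf L \<and> (\<forall>e\<in>L - V. x e = y e)")
    case False
    then show ?thesis
      unfolding embed_def mat_mult_def by (auto intro!: sum.neutral)
  next
    case True
    then have x: "x \<in> conf L" and xy: "\<forall>e\<in>L - V. x e = y e" by auto
    define Zx where "Zx = {z \<in> conf L. \<forall>e\<in>L - V. z e = x e}"
    have "mat_mult (conf L) (embed L V a) (embed L V b) x y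
        = (\<Sum>z\<in>conf L. if z \<in> Zx then a (restr x V) (restr z V) * b (restr z V) (restr y V) else 0)"
      unfolding mat_mult_def embed_def Zx_def using True by (intro sum.cong) auto
    also have "\<dots> = (\<Sum>z\<in>Zx. a (restr x V) (restr z V) * b (restr z V) (restr y V))"
      unfolding Zx_def by (simp add: sum.inter_filter[OF finite_conf[OF L], symmetric])
    also have "\<dots> = (\<Sum>w\<in>conf V. a (restr x V) w * b w (restr y V))"
    proof (rule sum.reindex_bij_witness[where j = "\<lambda>z. restr z V" and i = "\<lambda>w e. if e \<in> V then w e else x e"])
      fix z :: "edge \<Rightarrow> 'g" assume z: "z \<in> Zx"
      show "(\<lambda>e. if e \<in> V then restr z V e else x e) = z"
      proof
        fix e
        show "(if e \<in> V then restr z V e else x e) = z e"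
          using z x conf_outside[of x L e] conf_outside[of z L e] unfolding Zx_def restr_def
          by (cases "e \<in> L") auto
      qed
    next
      fix w :: "edge \<Rightarrow> 'g" assume w: "w \<in> conf V"
      show "restr (\<lambda>e. if e \<in> V then w e else x e) V = w"
        using w unfolding restr_def conf_def by auto
      show "(\<lambda>e. if e \<in> V then w e else x e) \<in> Zx"
        using w x V unfolding Zx_def conf_def by auto
    qed (simp_all add: restr_conf)
    also have "\<dots> = embed L V (mat_mult (conf V) a b) x y"
      unfolding embed_def mat_mult_def using True by simp
    finally show ?thesis by simp
  qed
qed

lemma embed_empty:
  fixes Q :: "('g::zero) op"
  shows "embed L {} Q = (\<lambda>x y. Q (\<lambda>_. 0) (\<lambda>_. 0) * mat_id (conf L) x y)"
proof (intro ext)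
  fix x y :: "edge \<Rightarrow> 'g::zero"
  have "(x \<in> conf L \<and> y \<in> conf L \<and> (\<forall>f\<in>L - {}. x f = y f)) \<longleftrightarrow> (x = y \<and> x \<in> conf L)"
    unfolding conf_def by (auto simp: fun_eq_iff)
  moreover have "restr z {} = (\<lambda>_. 0)" for z :: "edge \<Rightarrow> 'g"
    unfolding restr_def by simp
  ultimately show "embed L {} Q x y = Q (\<lambda>_. 0) (\<lambda>_. 0) * mat_id (conf L) x y"
    unfolding embed_def mat_id_def by auto
qed

definition point_conf :: "edge \<Rightarrow> 'g \<Rightarrow> edge \<Rightarrow> 'g::zero" where
  "point_conf e g = (\<lambda>_. 0)(e := g)"

lemma restr_singleton_eq_point_conf: "restr x {e} = point_conf e g \<longleftrightarrow> x e = g"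
proof
  assume "restr x {e} = point_conf e g"
  from fun_cong[OF this, of e] show "x e = g"
    unfolding restr_def point_conf_def by simp
qed (auto simp: restr_def point_conf_def)

lemma embed_site_unit:
  fixes x z :: "edge \<Rightarrow> 'g::zero"
  assumes x: "x \<in> conf L" and z: "z \<in> conf L" and e: "e \<in> L"
  shows "embed L {e} (matrix_unit (point_conf e g) (point_conf e g')) x z
       = (if z = x(e := g') \<and> x e = g then 1 else 0)"
proof -
  have "((\<forall>f\<in>L - {e}. x f = z f) \<and> x e = g \<and> z e = g') \<longleftrightarrow> (z = x(e := g') \<and> x e = g)"
  proof
    assume A: "(\<forall>f\<in>L - {e}. x f = z f) \<and> x e = g \<and> z e = g'"
    have "z f = (x(e := g')) f" for f
      using A conf_outside[OF x, of f] conf_outside[OF z, of f] by (cases "f = e"; cases "f \<in> L") auto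
    then show "z = x(e := g') \<and> x e = g" using A by auto
  qed auto
  then show ?thesis
    unfolding embed_def matrix_unit_def restr_singleton_eq_point_conf using x z by auto
qed

lemma mat_mult_site_unit:
  fixes W :: "('g::{zero,finite}) op"
  assumes x: "x \<in> conf L" and e: "e \<in> L" and L: "finite L"
  shows "mat_mult (conf L) (embed L {e} (matrix_unit (point_conf e g) (point_conf e g'))) W x y
       = (if x e = g then W (x(e := g')) y else 0)"
proof -
  have "x(e := g') \<in> conf L"
    using x e unfolding conf_def by auto
  have "mat_mult (conf L) (embed L {e} (matrix_unit (point_conf e g) (point_conf e g'))) W x y
      = (\<Sum>z\<in>conf L. if z = x(e := g') then (if x e = g then W z y else 0) else 0)"
    unfolding mat_mult_def by (intro sum.cong refl) (simp add: embed_site_unit[OF x _ e])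
  also have "\<dots> = (if x(e := g') \<in> conf L then (if x e = g then W (x(e := g')) y else 0) else 0)"
    by (rule sum.delta[OF finite_conf[OF L]])
  finally show ?thesis
    using \<open>x(e := g') \<in> conf L\<close> by simp
qed

text \<open>The tensor decomposition \<open>\<B>(\<H>\<^bsub>insert e R\<^esub>) = \<B>(\<H>\<^sub>e) \<otimes> \<B>(\<H>\<^sub>R)\<close>
  along the matrix units at e.\<close>

lemma embed_insert:
  fixes Q :: "('g::{zero,finite}) op"
  assumes e: "e \<notin> R" and RL: "insert e R \<subseteq> L" and L: "finite L"
  shows "embed L (insert e R) Q = (\<lambda>x y. \<Sum>g\<in>UNIV. \<Sum>g'\<in>UNIV.
      mat_mult (conf L) (embed L {e} (matrix_unit (point_conf e g) (point_conf e g')))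
        (embed L R (\<lambda>a b. Q (a(e := g)) (b(e := g')))) x y)"
proof (intro ext)
  fix x y :: "edge \<Rightarrow> 'g"
  have eL: "e \<in> L" using RL by simp
  let ?Q = "\<lambda>g g' a b. Q (a(e := g)) (b(e := g'))"
  show "embed L (insert e R) Q x y = (\<Sum>g\<in>UNIV. \<Sum>g'\<in>UNIV.
      mat_mult (conf L) (embed L {e} (matrix_unit (point_conf e g) (point_conf e g'))) (embed L R (?Q g g')) x y)"
  proof (cases "x \<in> conf L")
    case False
    then show ?thesis unfolding embed_def mat_mult_def by simp
  next
    case x: True
    have "(\<Sum>g\<in>UNIV. \<Sum>g'\<in>UNIV.
        mat_mult (conf L) (embed L {e} (matrix_unit (point_conf e g) (point_conf e g'))) (embed L R (?Q g g')) x y)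
        = (\<Sum>g'\<in>UNIV. embed L R (?Q (x e) g') (x(e := g')) y)"
    proof -
      have "(\<Sum>g'\<in>UNIV. if x e = g then embed L R (?Q g g') (x(e := g')) y else 0)
          = (if x e = g then \<Sum>g'\<in>UNIV. embed L R (?Q g g') (x(e := g')) y else 0)" for g
        by simp
      then show ?thesis
        unfolding mat_mult_site_unit[OF x eL L] by simp
    qed
    also have "\<dots> = embed L R (?Q (x e) (y e)) (x(e := y e)) y"
    proof -
      have "embed L R (?Q (x e) g') (x(e := g')) y = 0" if "g' \<noteq> y e" for g'
        using that eL e unfolding embed_def by auto
      then show ?thesis
        by (subst sum.remove[of _ "y e"]) (auto intro!: sum.neutral)
    qed
    also have "\<dots> = embed L (insert e R) Q x y"
    proof -
      have "(\<forall>f\<in>L - R. (x(e := y e)) f = y f) \<longleftrightarrow> (\<forall>f\<in>L - insert e R. x f = y f)"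
        using eL e by auto
      moreover have "(restr (x(e := y e)) R)(e := x e) = restr x (insert e R)"
        "(restr y R)(e := y e) = restr y (insert e R)"
        unfolding restr_def using e by (auto simp: fun_eq_iff)
      moreover have "x(e := y e) \<in> conf L"
        using x eL unfolding conf_def by auto
      ultimately show ?thesis
        unfolding embed_def using x by auto
    qed
    finally show ?thesis by simp
  qed
qed

lemma star_subalgebra_embed_preimage:
  fixes G :: "('g::{zero,finite}) op set"
  assumes G: "star_subalgebra (conf L) G" and V: "V \<subseteq> L" and L: "finite L"
  shows "star_subalgebra (conf V) {s. mat_on (conf V) s \<and> embed L V s \<in> G}"
  (is "star_subalgebra _ ?M")
  unfolding star_subalgebra_def
proof (intro conjI ballI allI)
  have "embed L V (mat_id (conf V)) \<in> G"
    using G unfolding embed_mat_id[OF V] star_subalgebra_def by blast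
  then show "mat_id (conf V) \<in> ?M"
    using mat_on_mat_id by blast
  fix A assume A: "A \<in> ?M"
  then show "mat_on (conf V) A" by simp
  fix B assume B: "B \<in> ?M"
  show "(\<lambda>x y. a * A x y + b * B x y) \<in> ?M" for a b
  proof -
    have "embed L V (\<lambda>x y. a * A x y + b * B x y) \<in> G"
      using A B star_subalgebra_lin[OF G] unfolding embed_lin by simp
    moreover have "mat_on (conf V) (\<lambda>x y. a * A x y + b * B x y)"
      using A B by (simp add: mat_on_def)
    ultimately show ?thesis by simp
  qed
  have "embed L V (mat_mult (conf V) A B) \<in> G"
    using A B G unfolding embed_mat_mult[OF V L] star_subalgebra_def by simp
  then show "mat_mult (conf V) A B \<in> ?M"
    using A B mat_on_mat_mult by blast
next
  fix A assume A: "A \<in> ?M"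
  then have "embed L V (mat_adj A) \<in> G"
    using G unfolding embed_mat_adj[symmetric] star_subalgebra_def by simp
  then show "mat_adj A \<in> ?M"
    using A mat_on_mat_adj by blast
qed

text \<open>The double commutant theorem \<open>star_subalgebra_full\<close>, applied to the preimage of G under
  the embedding of the operators at site e.\<close>

lemma embed_site_mem:
  fixes G :: "('g::{zero,finite}) op set" and S :: "'i \<Rightarrow> 'g op"
  assumes G: "star_subalgebra (conf L) G" and e: "e \<in> L" and L: "finite L"
    and S_ops: "\<forall>i\<in>I. S i \<in> ops {e}"
    and S_comm: "\<forall>X\<in>ops {e}. (\<forall>i\<in>I. opmul {e} X (S i) = opmul {e} (S i) X)
                   \<longrightarrow> (\<exists>c. X = (\<lambda>x y. c * idop {e} x y))"
    and S_mem: "\<forall>i\<in>I. embed L {e} (S i) \<in> G"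
  shows "embed L {e} s \<in> G"
proof -
  let ?M = "{s. mat_on (conf {e}) s \<and> embed L {e} s \<in> G}"
  have M: "star_subalgebra (conf {e}) ?M"
    using star_subalgebra_embed_preimage[OF G _ L] e by simp
  have S_M: "S i \<in> ?M" if "i \<in> I" for i
    using S_ops S_mem that unfolding ops_eq_mat_on by simp
  have "(\<lambda>a b. if a \<in> conf {e} \<and> b \<in> conf {e} then s a b else 0) \<in> ?M"
  proof (rule star_subalgebra_full[OF finite_conf M])
    show "\<forall>Z. mat_on (conf {e}) Z \<longrightarrow> (\<forall>A\<in>?M. mat_mult (conf {e}) Z A = mat_mult (conf {e}) A Z)
        \<longrightarrow> (\<exists>\<kappa>. Z = (\<lambda>x y. \<kappa> * mat_id (conf {e}) x y))"
    proof (intro allI impI)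
      fix Z assume Z: "mat_on (conf {e}) Z" and comm: "\<forall>A\<in>?M. mat_mult (conf {e}) Z A = mat_mult (conf {e}) A Z"
      have "opmul {e} Z (S i) = opmul {e} (S i) Z" if "i \<in> I" for i
        unfolding opmul_eq_mat_mult using comm S_M[OF that] by blast
      moreover have "Z \<in> ops {e}"
        using Z unfolding ops_eq_mat_on .
      ultimately obtain \<kappa> where "Z = (\<lambda>x y. \<kappa> * idop {e} x y)"
        using S_comm by blast
      then show "\<exists>\<kappa>. Z = (\<lambda>x y. \<kappa> * mat_id (conf {e}) x y)"
        unfolding idop_eq_mat_id by blast
    qed
  qed (auto simp: mat_on_def)
  then show ?thesis
    by (simp add: embed_restrict)
qed

lemma embed_mem_of_sites:
  fixes G :: "('g::{zero,finite}) op set"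
  assumes G: "star_subalgebra (conf L) G" and L: "finite L" and R: "R \<subseteq> L"
    and sites: "\<And>e s. e \<in> R \<Longrightarrow> embed L {e} s \<in> G"
  shows "embed L R Q \<in> G"
  using finite_subset[OF R L] R sites
proof (induction R arbitrary: Q rule: finite_induct)
  case empty
  show ?case
    unfolding embed_empty
    using star_subalgebra_lin[OF G, of "mat_id (conf L)" "mat_id (conf L)" "Q (\<lambda>_. 0) (\<lambda>_. 0)" 0] G
    unfolding star_subalgebra_def by simp
next
  case (insert e R)
  define F where "F g g' = mat_mult (conf L) (embed L {e} (matrix_unit (point_conf e g) (point_conf e g')))
      (embed L R (\<lambda>a b. Q (a(e := g)) (b(e := g'))))" for g g'
  have "F g g' \<in> G" for g g'
    using G insert unfolding star_subalgebra_def F_def by simp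
  then have "(\<lambda>x y. \<Sum>g'\<in>UNIV. 1 * F g g' x y) \<in> G" for g
    by (intro star_subalgebra_sum[OF G]) auto
  then have "(\<lambda>x y. \<Sum>g\<in>UNIV. 1 * (\<lambda>x y. \<Sum>g'\<in>UNIV. 1 * F g g' x y) x y) \<in> G"
    by (intro star_subalgebra_sum[OF G]) auto
  then show ?case
    unfolding embed_insert[OF insert.hyps(2) insert.prems(1) L] F_def by simp
qed

section \<open>The Davies generator\<close>

lemma lindblad_eq_lindbladian:
  "lindblad L ev P I S h R X
     = lindbladian (conf L) (R \<times> I \<times> bohr ev)
         (\<lambda>(e, i, \<omega>). freq L ev P (embed L {e} (S e i)) \<omega>) (\<lambda>(e, i, \<omega>). h e i \<omega>) X"
  unfolding lindblad_def dissip_def lindbladian_def Let_def opmul_eq_mat_mult adj_eq_mat_adj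
  by (simp add: sum.cartesian_product case_prod_beta)

lemma mat_adj_freq_embed:
  assumes "spectral_resolution (conf L) ev P"
  shows "mat_adj (freq L ev P (embed L V A) \<omega>) = freq L ev P (embed L V (adj A)) (- \<omega>)"
  using spectral_resolution.bohr_part_mat_adj[OF assms]
  by (simp add: freq_eq_bohr_part embed_mat_adj adj_eq_mat_adj)

theorem op_kernel_lindblad:
  fixes P :: "real \<Rightarrow> ('g::{zero,finite}) op"
  assumes L: "finite L" and R: "R \<subseteq> L" and spec: "spectral_resolution (conf L) ev P"
    and I: "finite I"
    and S_adj: "\<forall>e\<in>L. \<forall>i\<in>I. \<exists>j\<in>I. S e j = adj (S e i)"
    and h_pos: "\<forall>e\<in>L. \<forall>i\<in>I. \<forall>\<omega>\<in>bohr ev. h e i \<omega> > 0"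
  shows "op_kernel L (lindblad L ev P I S h R)
       = commutant L {freq L ev P (embed L {e} (S e i)) \<omega> | e i \<omega>. e \<in> R \<and> i \<in> I \<and> \<omega> \<in> bohr ev}"
proof -
  define K where "K = R \<times> I \<times> bohr ev"
  define T where "T = (\<lambda>(e, i, \<omega>). freq L ev P (embed L {e} (S e i)) \<omega>)"
  have finite_K: "finite K"
    unfolding K_def using finite_subset[OF R L] I finite_bohr[OF spectral_resolution.finite_ev[OF spec]]
    by simp
  have T_on: "\<forall>k\<in>K. mat_on (conf L) (T k)"
    unfolding T_def freq_eq_bohr_part using spectral_resolution.bohr_part_mat_on[OF spec] by auto
  have c_pos: "\<forall>k\<in>K. (\<lambda>(e, i, \<omega>). h e i \<omega>) k > 0"
    unfolding K_def using h_pos R by auto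
  have T_adj: "\<forall>k\<in>K. \<exists>k'\<in>K. T k' = mat_adj (T k)"
  proof
    fix k assume "k \<in> K"
    then obtain e i \<omega> where k: "k = (e, i, \<omega>)" "e \<in> R" "i \<in> I" "\<omega> \<in> bohr ev"
      unfolding K_def by auto
    then obtain j where j: "j \<in> I" "S e j = adj (S e i)"
      using S_adj R by blast
    then show "\<exists>k'\<in>K. T k' = mat_adj (T k)"
      using k bohr_uminus mat_adj_freq_embed[OF spec] j(2)
      unfolding K_def T_def by (intro bexI[of _ "(e, j, - \<omega>)"]) auto
  qed
  have jumps: "{freq L ev P (embed L {e} (S e i)) \<omega> | e i \<omega>. e \<in> R \<and> i \<in> I \<and> \<omega> \<in> bohr ev} = T ` K"
    unfolding K_def T_def by force
  have "X \<in> op_kernel L (lindblad L ev P I S h R) \<longleftrightarrow> X \<in> commutant L (T ` K)" for X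
    using lindbladian_eq_0_iff_commute[OF finite_conf[OF L] finite_K T_on c_pos T_adj, of X]
    unfolding op_kernel_def commutant_def lindblad_eq_lindbladian K_def[symmetric] T_def[symmetric]
      opmul_eq_mat_mult ops_eq_mat_on
    by auto
  then show ?thesis
    unfolding jumps set_eq_iff by blast
qed

lemma commutant_antimono: "A \<subseteq> B \<Longrightarrow> commutant L B \<subseteq> commutant L A"
  unfolding commutant_def by blast

lemma jumps_subset_local:
  assumes R: "R \<subseteq> L"
  shows "{freq L ev P (embed L {e} (S e i)) \<omega> | e i \<omega>. e \<in> R \<and> i \<in> I \<and> \<omega> \<in> bohr ev}
       \<subseteq> {freq L ev P Q \<omega> | Q \<omega>. Q \<in> local_ops L R \<and> \<omega> \<in> bohr ev}"
proof clarify
  fix e i \<omega> assume "e \<in> R" "\<omega> \<in> bohr ev"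
  have "embed L {e} (S e i) = embed L R (embed R {e} (S e i))"
    by (rule embed_embed[OF \<open>e \<in> R\<close> R, symmetric])
  moreover have "embed R {e} (S e i) \<in> ops R"
    unfolding ops_eq_mat_on by (rule embed_mat_on)
  ultimately have "embed L {e} (S e i) \<in> local_ops L R"
    unfolding local_ops_def by (rule image_eqI)
  then show "\<exists>Q \<omega>'. freq L ev P (embed L {e} (S e i)) \<omega> = freq L ev P Q \<omega>'
      \<and> Q \<in> local_ops L R \<and> \<omega>' \<in> bohr ev"
    using \<open>\<omega> \<in> bohr ev\<close> by blast
qed

theorem commutant_jumps_eq_commutant_local:
  fixes P :: "real \<Rightarrow> ('g::{zero,finite}) op"
  assumes L: "finite L" and R: "R \<subseteq> L" and spec: "spectral_resolution (conf L) ev P"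
    and S_ops: "\<forall>e\<in>L. \<forall>i\<in>I. S e i \<in> ops {e}"
    and S_adj: "\<forall>e\<in>L. \<forall>i\<in>I. \<exists>j\<in>I. S e j = adj (S e i)"
    and S_comm: "\<forall>e\<in>L. \<forall>X\<in>ops {e}. (\<forall>i\<in>I. opmul {e} X (S e i) = opmul {e} (S e i) X)
                   \<longrightarrow> (\<exists>c. X = (\<lambda>x y. c * idop {e} x y))"
  shows "commutant L {freq L ev P (embed L {e} (S e i)) \<omega> | e i \<omega>. e \<in> R \<and> i \<in> I \<and> \<omega> \<in> bohr ev}
       = commutant L {freq L ev P Q \<omega> | Q \<omega>. Q \<in> local_ops L R \<and> \<omega> \<in> bohr ev}"
    (is "commutant L ?jumps = commutant L ?local")
proof
  show "commutant L ?local \<subseteq> commutant L ?jumps"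
    by (rule commutant_antimono[OF jumps_subset_local[OF R]])
next
  interpret spectral_resolution "conf L" ev P by (rule spec)
  show "commutant L ?jumps \<subseteq> commutant L ?local"
  proof
    fix X assume "X \<in> commutant L ?jumps"
    then have X_on: "mat_on (conf L) X"
      and X_comm: "\<And>e i \<omega>. e \<in> R \<Longrightarrow> i \<in> I \<Longrightarrow> \<omega> \<in> bohr ev \<Longrightarrow>
         mat_mult (conf L) X (bohr_part (conf L) ev P (embed L {e} (S e i)) \<omega>)
         = mat_mult (conf L) (bohr_part (conf L) ev P (embed L {e} (S e i)) \<omega>) X"
      unfolding commutant_def ops_eq_mat_on opmul_eq_mat_mult freq_eq_bohr_part by blast+
    define G where "G = bohr_commutant {X, mat_adj X}"
    have G: "star_subalgebra (conf L) G"
      unfolding G_def by (rule bohr_commutant_star_subalgebra) (use X_on mat_on_mat_adj in auto)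
    have "embed L {e} (S e i) \<in> G" if e: "e \<in> R" and i: "i \<in> I" for e i
    proof -
      obtain j where "j \<in> I" "S e j = adj (S e i)"
        using S_adj e i R by blast
      then have "mat_adj (embed L {e} (S e i)) = embed L {e} (S e j)"
        by (simp add: embed_mat_adj adj_eq_mat_adj)
      then show ?thesis
        unfolding G_def using bohr_commutant_adjoint_pair[OF embed_mat_on] X_comm e i \<open>j \<in> I\<close>
        by simp
    qed
    then have "embed L {e} s \<in> G" if "e \<in> R" for e s
      using embed_site_mem[OF G _ L, of e I "S e"] S_ops S_comm R that by blast
    then have local_G: "Q \<in> G" if "Q \<in> local_ops L R" for Q
      using embed_mem_of_sites[OF G L R] that unfolding local_ops_def by blast
    show "X \<in> commutant L ?local"
      unfolding commutant_def ops_eq_mat_on opmul_eq_mat_mult freq_eq_bohr_part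
      using X_on local_G unfolding G_def bohr_commutant_def by blast
  qed
qed

theorem mainTheorem7:
  fixes N :: nat and \<Lambda> R :: "edge set" and \<beta> :: real
    and ev :: "real set" and P :: "real \<Rightarrow> ('g::{ab_group_add,finite}) op"
    and I :: "'i set" and S :: "edge \<Rightarrow> 'i \<Rightarrow> 'g op"
    and h :: "edge \<Rightarrow> 'i \<Rightarrow> real \<Rightarrow> real"
  assumes \<Lambda>: "\<Lambda> \<subseteq> torus_edges N"
    and R: "R \<subseteq> \<Lambda>"
    and \<beta>: "0 \<le> \<beta>"
    and spec: "spectral_decomp \<Lambda> (qd_ham N \<Lambda>) ev P"
    and I: "finite I"
    and S_ops: "\<forall>e\<in>\<Lambda>. \<forall>i\<in>I. S e i \<in> ops {e}"
    and S_adj: "\<forall>e\<in>\<Lambda>. \<forall>i\<in>I. \<exists>j\<in>I. S e j = adj (S e i)"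
    and S_comm: "\<forall>e\<in>\<Lambda>. \<forall>X\<in>ops {e}. (\<forall>i\<in>I. opmul {e} X (S e i) = opmul {e} (S e i) X)
                   \<longrightarrow> (\<exists>c. X = (\<lambda>x y. c * idop {e} x y))"
    and h_pos: "\<forall>e\<in>\<Lambda>. \<forall>i\<in>I. \<forall>\<omega>\<in>bohr ev. h e i \<omega> > 0"
    and h_db: "\<forall>e\<in>\<Lambda>. \<forall>i\<in>I. \<forall>\<omega>\<in>bohr ev. h e i (- \<omega>) = h e i \<omega> * exp (- \<beta> * \<omega>)"
  shows "op_kernel \<Lambda> (lindblad \<Lambda> ev P I S h R)
           = commutant \<Lambda> {freq \<Lambda> ev P (embed \<Lambda> {e} (S e i)) \<omega> | e i \<omega>. e \<in> R \<and> i \<in> I \<and> \<omega> \<in> bohr ev}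
       \<and> commutant \<Lambda> {freq \<Lambda> ev P (embed \<Lambda> {e} (S e i)) \<omega> | e i \<omega>. e \<in> R \<and> i \<in> I \<and> \<omega> \<in> bohr ev}
           = commutant \<Lambda> {freq \<Lambda> ev P Q \<omega> | Q \<omega>. Q \<in> local_ops \<Lambda> R \<and> \<omega> \<in> bohr ev}"
proof -
  have L: "finite \<Lambda>"
    using \<Lambda> finite_torus_edges finite_subset by blast
  have spec': "spectral_resolution (conf \<Lambda>) ev P"
    by (rule spectral_decomp_resolution[OF L spec])
  show ?thesis
    using op_kernel_lindblad[OF L R spec' I S_adj h_pos]
      commutant_jumps_eq_commutant_local[OF L R spec' S_ops S_adj S_comm]
    by simp
qed

end
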